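(* Let $\alpha\in\ell^2$ and suppose $R_\alpha$ is bounded on $\ell^2$. Let $\mathcal{L}=\lim_{n\to\infty}L([n,\infty))$. Then $\|R_\alpha\|_e=\mathcal{L}/\sqrt2$. In particular, $R_\alpha$ is compact if and only if $\mathcal{L}=0$.
   Context: $\mathbb{N}=\{0,1,2,\dots\}$; $(R_\alpha f)(k)=\alpha_k\sum_{j=0}^kf(j)$. Essential norm: $\|T\|_e=\inf\{\|T-P\|:P$ finite rank$\}$. For a finite natural interval $I$: $\mu(I)=\sum_{k\in I}|\alpha_k|^2$, $\|f\|_{2,I}=(\sum_{k\in I}|f(k)|^2)^{1/2}$, $l(I,f)=\sum_{k\in I}\sum_{n\in I\setminus\{k\}}|\alpha_k\alpha_n\sum_{j=\min(k,n)+1}^{\max(k,n)}f(j)|^2$, $L(I)=(\sup_{\|f\|_{2,I}\le1}l(I,f)/\mu(I))^{1/2}$ (sup over $f$ supported in $I$; $L(I)=0$ if $\alpha$ vanishes on $I$); $L([a,\infty))=\sup_{b\ge a}L([a,b])$. *)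

theory Defs
  imports "HOL-Analysis.Analysis"
begin

definition l2 :: "(nat \<Rightarrow> complex) \<Rightarrow> bool" where
  "l2 f \<longleftrightarrow> summable (\<lambda>k. (cmod (f k))^2)"

definition l2norm :: "(nat \<Rightarrow> complex) \<Rightarrow> real" where
  "l2norm f = sqrt (\<Sum>k. (cmod (f k))^2)"

definition Ralpha :: "(nat \<Rightarrow> complex) \<Rightarrow> (nat \<Rightarrow> complex) \<Rightarrow> (nat \<Rightarrow> complex)" where
  "Ralpha \<alpha> f = (\<lambda>k. \<alpha> k * (\<Sum>j\<le>k. f j))"

text \<open>T is a bounded operator on l2 (only its action on l2 matters).\<close>
definition bounded_op :: "((nat \<Rightarrow> complex) \<Rightarrow> (nat \<Rightarrow> complex)) \<Rightarrow> bool" where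
  "bounded_op T \<longleftrightarrow> (\<forall>f. l2 f \<longrightarrow> l2 (T f)) \<and>
     (\<exists>C. \<forall>f. l2 f \<longrightarrow> l2norm (T f) \<le> C * l2norm f)"

definition linear_op :: "((nat \<Rightarrow> complex) \<Rightarrow> (nat \<Rightarrow> complex)) \<Rightarrow> bool" where
  "linear_op T \<longleftrightarrow> (\<forall>f g. l2 f \<longrightarrow> l2 g \<longrightarrow> T (\<lambda>k. f k + g k) = (\<lambda>k. T f k + T g k)) \<and>
     (\<forall>c f. l2 f \<longrightarrow> T (\<lambda>k. c * f k) = (\<lambda>k. c * T f k))"

definition opnorm :: "((nat \<Rightarrow> complex) \<Rightarrow> (nat \<Rightarrow> complex)) \<Rightarrow> real" where
  "opnorm T = Sup {l2norm (T f) | f. l2 f \<and> l2norm f \<le> 1}"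

definition finite_rank :: "((nat \<Rightarrow> complex) \<Rightarrow> (nat \<Rightarrow> complex)) \<Rightarrow> bool" where
  "finite_rank P \<longleftrightarrow> linear_op P \<and> bounded_op P \<and>
     (\<exists>n::nat. \<exists>v::nat \<Rightarrow> nat \<Rightarrow> complex. (\<forall>i<n. l2 (v i)) \<and>
        (\<forall>f. l2 f \<longrightarrow> (\<exists>c::nat \<Rightarrow> complex. P f = (\<lambda>k. \<Sum>i<n. c i * v i k))))"

definition ess_norm :: "((nat \<Rightarrow> complex) \<Rightarrow> (nat \<Rightarrow> complex)) \<Rightarrow> real" where
  "ess_norm T = Inf {opnorm (\<lambda>f k. T f k - P f k) | P. finite_rank P}"

definition compact_op :: "((nat \<Rightarrow> complex) \<Rightarrow> (nat \<Rightarrow> complex)) \<Rightarrow> bool" where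
  "compact_op T \<longleftrightarrow> (\<forall>F::nat \<Rightarrow> nat \<Rightarrow> complex. \<forall>B.
      (\<forall>m. l2 (F m) \<and> l2norm (F m) \<le> B) \<longrightarrow>
      (\<exists>g r. l2 g \<and> strict_mono r \<and>
          (\<lambda>m. l2norm (\<lambda>k. T (F (r m)) k - g k)) \<longlonglongrightarrow> 0))"

definition mu :: "(nat \<Rightarrow> complex) \<Rightarrow> nat \<Rightarrow> nat \<Rightarrow> real" where
  "mu \<alpha> a b = (\<Sum>k\<in>{a..b}. (cmod (\<alpha> k))^2)"

definition lI :: "(nat \<Rightarrow> complex) \<Rightarrow> nat \<Rightarrow> nat \<Rightarrow> (nat \<Rightarrow> complex) \<Rightarrow> real" where
  "lI \<alpha> a b f = (\<Sum>k\<in>{a..b}. \<Sum>n\<in>{a..b} - {k}.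
      (cmod (\<alpha> k * \<alpha> n * (\<Sum>j\<in>{min k n + 1..max k n}. f j)))^2)"

definition LI :: "(nat \<Rightarrow> complex) \<Rightarrow> nat \<Rightarrow> nat \<Rightarrow> real" where
  "LI \<alpha> a b = (if mu \<alpha> a b = 0 then 0 else
      sqrt (Sup {lI \<alpha> a b f / mu \<alpha> a b | f.
          (\<forall>k. k \<notin> {a..b} \<longrightarrow> f k = 0) \<and> (\<Sum>k\<in>{a..b}. (cmod (f k))^2) \<le> 1}))"

definition Ltail :: "(nat \<Rightarrow> complex) \<Rightarrow> nat \<Rightarrow> real" where
  "Ltail \<alpha> a = Sup {LI \<alpha> a b | b. a \<le> b}"

end

theory Submission
  imports Defs "HOL-Library.Diagonal_Subsequence"
begin

text \<open>
  Write \<open>R = R\<^sub>\<alpha>\<close> and let \<open>\<Gamma>\<close> be the limit of the decreasing squared norms of \<open>R\<close> on sequences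
  vanishing below \<open>n\<close>. Cutting inputs off at \<open>N\<close> gives finite rank operators whose distance to
  \<open>R\<close> is at most that tail norm at \<open>N\<close>, so \<open>\<parallel>R\<parallel>\<^sub>e\<^sup>2 \<le> \<Gamma>\<close>, and \<open>R\<close> is compact if \<open>\<Gamma> = 0\<close>.
  Conversely, near-extremal test sequences far out can be padded to total sum zero; \<open>R\<close> then maps
  each of them into its own block, so these blocks stay orthogonal before and after applying \<open>R\<close>.
  A finite rank \<open>P\<close> annihilates some unit combination of finitely many blocks, on which \<open>R - P\<close> has
  norm almost \<open>\<surd>\<Gamma>\<close>; and if \<open>\<Gamma> > 0\<close> the normalized blocks show that \<open>R\<close> is not compact.
  Finally, the variance identity
  \<open>l(I, f) = 2\<mu>(I) \<Sum> |\<alpha>\<^sub>k|\<^sup>2 |S\<^sub>k|\<^sup>2 - 2 |\<Sum> |\<alpha>\<^sub>k|\<^sup>2 S\<^sub>k|\<^sup>2\<close>, with \<open>S\<close> the partial sums of \<open>f\<close> over \<open>I\<close>,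
  gives \<open>L([n, \<infinity>))\<^sup>2 \<rightarrow> 2\<Gamma>\<close>: the first term is at most \<open>2\<mu>(I)\<close> times a tail norm, and the mean term
  is negligible once \<open>I\<close> starts at an index of positive weight followed by a long stretch of small
  weight.
\<close>

section \<open>Square-summable sequences\<close>

lemma l2norm_nonneg [simp]: "l2 f \<Longrightarrow> 0 \<le> l2norm f"
  by (simp add: l2norm_def l2_def suminf_nonneg)

lemma l2norm_sq: "l2 f \<Longrightarrow> (l2norm f)^2 = (\<Sum>k. (cmod (f k))^2)"
  unfolding l2norm_def l2_def by (simp add: suminf_nonneg)

lemma sum_le_l2norm_sq: "l2 f \<Longrightarrow> (\<Sum>k<n. (cmod (f k))^2) \<le> (l2norm f)^2"
  by (simp add: l2norm_sq l2_def sum_le_suminf)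

lemma sum_ivl_le_l2norm_sq: "l2 f \<Longrightarrow> (\<Sum>k\<in>{a..<b}. (cmod (f k))^2) \<le> (l2norm f)^2"
  by (rule order_trans[OF sum_mono2 sum_le_l2norm_sq[of f b]]) auto

lemma L2_set_window_le_l2norm: "l2 f \<Longrightarrow> L2_set (\<lambda>k. cmod (f k)) {a..<b} \<le> l2norm f"
  using real_sqrt_le_mono[OF sum_ivl_le_l2norm_sq[of f a b]] by (simp add: L2_set_def)

lemma norm_le_l2norm: "l2 f \<Longrightarrow> cmod (f j) \<le> l2norm f"
  using sum_ivl_le_l2norm_sq[of f j "Suc j"] by (simp add: power2_le_iff_abs_le)

lemma l2_finite_support:
  assumes "\<And>j. K \<le> j \<Longrightarrow> f j = 0"
  shows "l2 f" and "(l2norm f)^2 = (\<Sum>j<K. (cmod (f j))^2)"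
proof -
  have "(\<lambda>j. (cmod (f j))^2) sums (\<Sum>j<K. (cmod (f j))^2)"
    by (rule sums_finite) (auto simp: assms)
  then show "l2 f" and "(l2norm f)^2 = (\<Sum>j<K. (cmod (f j))^2)"
    by (auto simp: l2_def l2norm_def sums_iff sum_nonneg)
qed

lemma l2_zero [simp]: "l2 (\<lambda>k. 0)"
  by (simp add: l2_def)

lemma l2_scale: "l2 f \<Longrightarrow> l2 (\<lambda>k. c * f k)"
  unfolding l2_def by (simp add: norm_mult power_mult_distrib summable_mult)

lemma l2_add:
  assumes "l2 f" "l2 g"
  shows "l2 (\<lambda>k. f k + g k)"
proof -
  have bound: "(cmod (f k + g k))^2 \<le> 2 * (cmod (f k))^2 + 2 * (cmod (g k))^2" for k
  proof -
    have "(cmod (f k + g k))^2 \<le> (cmod (f k) + cmod (g k))^2"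
      by (simp add: norm_triangle_ineq power_mono)
    also have "\<dots> \<le> 2 * (cmod (f k))^2 + 2 * (cmod (g k))^2"
      using zero_le_power2[of "cmod (f k) - cmod (g k)"] by (simp add: power2_eq_square algebra_simps)
    finally show ?thesis .
  qed
  have "summable (\<lambda>k. 2 * (cmod (f k))^2 + 2 * (cmod (g k))^2)"
    using assms by (intro summable_add summable_mult) (auto simp: l2_def)
  then show ?thesis
    unfolding l2_def by (rule summable_comparison_test'[where N = 0]) (simp add: bound)
qed

lemma l2_diff: "l2 f \<Longrightarrow> l2 g \<Longrightarrow> l2 (\<lambda>k. f k - g k)"
  using l2_add[of f "\<lambda>k. -1 * g k"] l2_scale[of g "-1"] by simp

lemma l2_sum: "finite A \<Longrightarrow> (\<And>i. i \<in> A \<Longrightarrow> l2 (g i)) \<Longrightarrow> l2 (\<lambda>k. \<Sum>i\<in>A. d i * g i k)"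
proof (induction A rule: finite_induct)
  case (insert x F)
  then show ?case
    using l2_add[OF l2_scale[of "g x" "d x"], of "\<lambda>k. \<Sum>i\<in>F. d i * g i k"] by simp
qed simp

lemma l2norm_triangle:
  assumes f: "l2 f" and g: "l2 g"
  shows "l2norm (\<lambda>k. f k + g k) \<le> l2norm f + l2norm g"
proof -
  have L2_le: "L2_set (\<lambda>k. cmod (h k)) {..<n} \<le> l2norm h" if "l2 h" for h n
    using real_sqrt_le_mono[OF sum_le_l2norm_sq[OF that, of n]] that by (simp add: L2_set_def)
  have "(\<Sum>k<n. (cmod (f k + g k))^2) \<le> (l2norm f + l2norm g)^2" for n
  proof -
    have "L2_set (\<lambda>k. cmod (f k + g k)) {..<n} \<le> L2_set (\<lambda>k. cmod (f k) + cmod (g k)) {..<n}"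
      by (rule L2_set_mono) (auto simp: norm_triangle_ineq)
    also have "\<dots> \<le> L2_set (\<lambda>k. cmod (f k)) {..<n} + L2_set (\<lambda>k. cmod (g k)) {..<n}"
      by (rule L2_set_triangle_ineq)
    also have "\<dots> \<le> l2norm f + l2norm g"
      using L2_le[OF f] L2_le[OF g] by (rule add_mono)
    finally have "(L2_set (\<lambda>k. cmod (f k + g k)) {..<n})^2 \<le> (l2norm f + l2norm g)^2"
      by (rule power_mono) (rule L2_set_nonneg)
    then show ?thesis
      by (simp add: L2_set_def sum_nonneg)
  qed
  then have "(\<Sum>k. (cmod (f k + g k))^2) \<le> (l2norm f + l2norm g)^2"
    using l2_add[OF f g] by (intro suminf_le_const) (auto simp: l2_def)
  then show ?thesis
    unfolding l2norm_def[of "\<lambda>k. f k + g k"] using f g by (intro real_le_lsqrt) auto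
qed

lemma l2norm_triangle_diff:
  assumes "l2 f" "l2 g"
  shows "l2norm (\<lambda>k. f k - g k) \<le> l2norm f + l2norm g"
proof -
  have "l2norm (\<lambda>k. - g k) = l2norm g"
    by (simp add: l2norm_def)
  then show ?thesis
    using l2norm_triangle[OF assms(1) l2_scale[OF assms(2), of "-1"]] by simp
qed

definition trunc :: "nat \<Rightarrow> (nat \<Rightarrow> complex) \<Rightarrow> nat \<Rightarrow> complex" where
  "trunc N f = (\<lambda>j. if j < N then f j else 0)"

definition tail :: "nat \<Rightarrow> (nat \<Rightarrow> complex) \<Rightarrow> nat \<Rightarrow> complex" where
  "tail N f = (\<lambda>j. if j < N then 0 else f j)"

lemma trunc_add_tail: "(\<lambda>j. trunc N f j + tail N f j) = f"
  by (simp add: trunc_def tail_def fun_eq_iff)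

lemma l2_trunc: "l2 (trunc N f)"
  and l2norm_trunc_sq: "(l2norm (trunc N f))^2 = (\<Sum>j<N. (cmod (f j))^2)"
  using l2_finite_support[of N "trunc N f"] by (simp_all add: trunc_def)

lemma l2norm_trunc_le:
  assumes "l2 f"
  shows "l2norm (trunc N f) \<le> l2norm f"
proof (rule power2_le_imp_le)
  show "(l2norm (trunc N f))^2 \<le> (l2norm f)^2"
    unfolding l2norm_trunc_sq by (rule sum_le_l2norm_sq[OF assms])
qed (use assms in simp)

lemma l2_tail:
  assumes "l2 f"
  shows "l2 (tail N f)"
proof -
  have "tail N f = (\<lambda>k. f k - trunc N f k)"
    by (simp add: trunc_def tail_def fun_eq_iff)
  then show ?thesis
    using l2_diff[OF assms l2_trunc] by simp
qed

lemma l2norm_tail_le: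
  assumes "l2 f"
  shows "l2norm (tail N f) \<le> l2norm f"
proof -
  have "(\<Sum>k. (cmod (tail N f k))^2) \<le> (\<Sum>k. (cmod (f k))^2)"
  proof (rule suminf_le)
    show "(cmod (tail N f k))^2 \<le> (cmod (f k))^2" for k
      by (simp add: tail_def)
  qed (use l2_tail[OF assms] assms in \<open>simp_all add: l2_def\<close>)
  then show ?thesis
    unfolding l2norm_def by (rule real_sqrt_le_mono)
qed

lemma eventually_block_sums_small:
  fixes f :: "nat \<Rightarrow> real"
  assumes "summable f" "\<And>k. 0 \<le> f k" "0 < \<epsilon>"
  shows "\<exists>N. \<forall>m\<ge>N. \<forall>b. (\<Sum>k\<in>{m..<b}. f k) < \<epsilon>"
proof -
  obtain N where N: "\<forall>m\<ge>N. norm (\<Sum>i. f (i + m)) < \<epsilon>"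
    using suminf_exist_split[OF assms(3,1)] by blast
  have "(\<Sum>k\<in>{m..<b}. f k) \<le> (\<Sum>i. f (i + m))" for m b
  proof -
    have "(\<Sum>k\<in>{m..<b}. f k) = (\<Sum>i<b - m. f (i + m))"
      by (subst sum.atLeastLessThan_shift_0) (simp add: atLeast0LessThan add.commute)
    also have "\<dots> \<le> (\<Sum>i. f (i + m))"
      using assms by (intro sum_le_suminf summable_ignore_initial_segment) auto
    finally show ?thesis .
  qed
  moreover have "(\<Sum>i. f (i + m)) < \<epsilon>" if "N \<le> m" for m
    using N that abs_ge_self[of "\<Sum>i. f (i + m)"] by fastforce
  ultimately show ?thesis
    using le_less_trans by blast
qed

text \<open>Mass that escapes to infinity prevents \<open>\<ell>\<^sup>2\<close>-convergence: the limit would have to carry it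
  on ever later windows, where its own mass is small.\<close>

lemma no_l2_limit_of_escaping_mass:
  fixes y :: "nat \<Rightarrow> nat \<Rightarrow> complex" and a b r :: "nat \<Rightarrow> nat"
  assumes y: "\<And>i. l2 (y i)" and a: "strict_mono a" and c: "0 < c"
    and mass: "\<And>i. c \<le> (\<Sum>k\<in>{a i..<b i}. (cmod (y i k))^2)"
    and g: "l2 g" and r: "strict_mono r"
  shows "\<not> (\<lambda>m. l2norm (\<lambda>k. y (r m) k - g k)) \<longlonglongrightarrow> 0"
proof
  assume lim: "(\<lambda>m. l2norm (\<lambda>k. y (r m) k - g k)) \<longlonglongrightarrow> 0"
  obtain N where N: "\<forall>m\<ge>N. \<forall>b. (\<Sum>k\<in>{m..<b}. (cmod (g k))^2) < c / 4"
    using eventually_block_sums_small[of "\<lambda>k. (cmod (g k))^2" "c / 4"] g c by (auto simp: l2_def)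
  have far: "sqrt c / 2 \<le> l2norm (\<lambda>k. y (r m) k - g k)" if "N \<le> m" for m
  proof -
    define W where "W = {a (r m)..<b (r m)}"
    have "N \<le> a (r m)"
      using that seq_suble[OF r, of m] seq_suble[OF a, of "r m"] by linarith
    then have "(\<Sum>k\<in>W. (cmod (g k))^2) < (sqrt c / 2)^2"
      using N c by (simp add: W_def power_divide)
    then have g_small: "L2_set (\<lambda>k. cmod (g k)) W < sqrt c / 2"
      unfolding L2_set_def using c by (intro real_less_lsqrt) simp_all
    have "sqrt c \<le> L2_set (\<lambda>k. cmod (y (r m) k)) W"
      unfolding L2_set_def W_def using mass by (simp add: real_sqrt_le_mono)
    also have "\<dots> \<le> L2_set (\<lambda>k. cmod (y (r m) k - g k) + cmod (g k)) W"
      by (rule L2_set_mono) (auto intro: order_trans[OF _ norm_triangle_ineq] simp: order.refl)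
    also have "\<dots> \<le> L2_set (\<lambda>k. cmod (y (r m) k - g k)) W + L2_set (\<lambda>k. cmod (g k)) W"
      by (rule L2_set_triangle_ineq)
    also have "L2_set (\<lambda>k. cmod (y (r m) k - g k)) W \<le> l2norm (\<lambda>k. y (r m) k - g k)"
      unfolding W_def by (rule L2_set_window_le_l2norm[OF l2_diff[OF y g]])
    finally show ?thesis
      using g_small by simp
  qed
  obtain M where M: "\<And>m. M \<le> m \<Longrightarrow> l2norm (\<lambda>k. y (r m) k - g k) < sqrt c / 2"
    using order_tendstoD(2)[OF lim, of "sqrt c / 2"] c by (auto simp: eventually_sequentially)
  show False
    using M[of "max M N"] far[of "max M N"] by simp
qed

lemma exists_coordinatewise_convergent_subseq:
  fixes F :: "nat \<Rightarrow> nat \<Rightarrow> complex"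
  assumes bound: "\<And>m j. cmod (F m j) \<le> B"
  obtains r \<phi> where "strict_mono r" "\<And>j. (\<lambda>m. F (r m) j) \<longlonglongrightarrow> \<phi> j"
proof -
  interpret D: subseqs "\<lambda>j s. \<exists>l. (\<lambda>m. F (s m) j) \<longlonglongrightarrow> l"
  proof
    fix j and s :: "nat \<Rightarrow> nat"
    have "bounded (range (\<lambda>m. F (s m) j))"
      unfolding bounded_iff using bound by blast
    then obtain l r' where "strict_mono r'" "((\<lambda>m. F (s m) j) \<circ> r') \<longlonglongrightarrow> l"
      using bounded_imp_convergent_subsequence by blast
    then show "\<exists>r'. strict_mono r' \<and> (\<exists>l. (\<lambda>m. F ((s \<circ> r') m) j) \<longlonglongrightarrow> l)"
      by (auto simp: o_def)
  qed
  have "\<forall>j. \<exists>l. (\<lambda>m. F (D.diagseq m) j) \<longlonglongrightarrow> l"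
  proof
    fix j
    obtain l where "(\<lambda>i. F ((D.diagseq \<circ> (+) (Suc j)) i) j) \<longlonglongrightarrow> l"
    proof (atomize_elim, rule D.diagseq_holds)
      fix r s n
      assume "strict_mono (r :: nat \<Rightarrow> nat)" "\<exists>l. (\<lambda>m. F (s m) n) \<longlonglongrightarrow> l"
      then show "\<exists>l. (\<lambda>m. F ((s \<circ> r) m) n) \<longlonglongrightarrow> l"
        using LIMSEQ_subseq_LIMSEQ[of "\<lambda>m. F (s m) n" _ r] by (auto simp: o_def)
    qed
    then have "(\<lambda>i. F (D.diagseq (i + Suc j)) j) \<longlonglongrightarrow> l"
      by (simp add: ac_simps)
    then have "(\<lambda>i. F (D.diagseq i) j) \<longlonglongrightarrow> l"
      by (rule LIMSEQ_offset)
    then show "\<exists>l. (\<lambda>m. F (D.diagseq m) j) \<longlonglongrightarrow> l"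
      by blast
  qed
  from choice[OF this] obtain \<phi> where "\<forall>j. (\<lambda>m. F (D.diagseq m) j) \<longlonglongrightarrow> \<phi> j"
    by blast
  then show ?thesis
    using that D.subseq_diagseq by blast
qed

lemma l2_coordinatewise_limit:
  assumes F: "\<And>m. l2 (F m)" "\<And>m. l2norm (F m) \<le> B" and lim: "\<And>j. (\<lambda>m. F m j) \<longlonglongrightarrow> \<phi> j"
  shows "l2 \<phi>" and "l2norm \<phi> \<le> B"
proof -
  have B: "0 \<le> B"
    using F(2)[of 0] l2norm_nonneg[OF F(1), of 0] by linarith
  have partial: "(\<Sum>j<K. (cmod (\<phi> j))^2) \<le> B^2" for K
  proof (rule LIMSEQ_le_const2)
    show "(\<lambda>m. \<Sum>j<K. (cmod (F m j))^2) \<longlonglongrightarrow> (\<Sum>j<K. (cmod (\<phi> j))^2)"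
      by (intro tendsto_intros lim)
    have "(\<Sum>j<K. (cmod (F m j))^2) \<le> B^2" for m
      using sum_le_l2norm_sq[OF F(1)] power_mono[OF F(2) l2norm_nonneg[OF F(1)]] order_trans by blast
    then show "\<exists>N. \<forall>m\<ge>N. (\<Sum>j<K. (cmod (F m j))^2) \<le> B^2"
      by blast
  qed
  show l2: "l2 \<phi>"
    unfolding l2_def by (rule summableI_nonneg_bounded[of _ "B^2"]) (auto intro: partial)
  have "(l2norm \<phi>)^2 \<le> B^2"
    unfolding l2norm_sq[OF l2] using l2 partial by (intro suminf_le_const) (auto simp: l2_def)
  then show "l2norm \<phi> \<le> B"
    using B by (rule power2_le_imp_le)
qed

lemma exists_zero_sum_extension:
  fixes f :: "nat \<Rightarrow> complex"
  assumes \<delta>: "0 < \<delta>"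
  obtains e g where "K < e" "s < e" "\<And>j. j < K \<Longrightarrow> g j = f j" "\<And>j. e \<le> j \<Longrightarrow> g j = 0"
    "(\<Sum>j<e. g j) = 0" "(\<Sum>j<e. (cmod (g j))^2) \<le> (\<Sum>j<K. (cmod (f j))^2) + \<delta>"
proof -
  define \<sigma> where "\<sigma> = (\<Sum>j<K. f j)"
  obtain L :: nat where L: "(cmod \<sigma>)^2 / \<delta> < L" "s < L"
    using reals_Archimedean2[of "max ((cmod \<sigma>)^2 / \<delta>) (real s)"] by auto
  then have L0: "0 < L"
    by simp
  define g where "g j = (if j < K then f j else if j < K + L then - \<sigma> / of_nat L else 0)" for j
  have split: "(\<Sum>j<K + L. h j) = (\<Sum>j<K. h j) + (\<Sum>j\<in>{K..<K + L}. h j)" for h :: "nat \<Rightarrow> 'a::comm_monoid_add"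
    using sum.atLeastLessThan_concat[of 0 K "K + L" h] by (simp add: atLeast0LessThan)
  have "(\<Sum>j\<in>{K..<K + L}. g j) = (\<Sum>j\<in>{K..<K + L}. - \<sigma> / of_nat L)"
    by (rule sum.cong) (auto simp: g_def)
  moreover have "(\<Sum>j<K. g j) = \<sigma>"
    by (simp add: g_def \<sigma>_def)
  ultimately have "(\<Sum>j<K + L. g j) = 0"
    using L0 split[of g] by simp
  moreover have "(\<Sum>j\<in>{K..<K + L}. (cmod (g j))^2) = (\<Sum>j\<in>{K..<K + L}. (cmod \<sigma> / L)^2)"
    by (rule sum.cong) (auto simp: g_def norm_divide)
  then have "(\<Sum>j\<in>{K..<K + L}. (cmod (g j))^2) < \<delta>"
    using L(1) L0 \<delta> by (simp add: power2_eq_square divide_less_eq mult.commute)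
  then have "(\<Sum>j<K + L. (cmod (g j))^2) \<le> (\<Sum>j<K. (cmod (f j))^2) + \<delta>"
    using split[of "\<lambda>j. (cmod (g j))^2"] by (simp add: g_def)
  ultimately show ?thesis
    using that[of "K + L" g] L L0 by (simp add: g_def)
qed

lemma weighted_variance_identity:
  fixes w :: "'i \<Rightarrow> real" and x :: "'i \<Rightarrow> complex"
  shows "(\<Sum>k\<in>J. \<Sum>m\<in>J. w k * w m * (cmod (x k - x m))^2)
     = 2 * (\<Sum>k\<in>J. w k) * (\<Sum>k\<in>J. w k * (cmod (x k))^2)
       - 2 * (cmod (\<Sum>k\<in>J. of_real (w k) * x k))^2"
proof -
  define W where "W k = complex_of_real (w k)" for k
  define S where "S = (\<Sum>k\<in>J. W k * x k)"
  have sq: "complex_of_real ((cmod z)^2) = z * cnj z" for z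
    by (rule complex_norm_square)
  have "complex_of_real (\<Sum>k\<in>J. \<Sum>m\<in>J. w k * w m * (cmod (x k - x m))^2)
      = (\<Sum>k\<in>J. \<Sum>m\<in>J. W k * W m * ((x k - x m) * cnj (x k - x m)))"
    by (simp only: of_real_sum of_real_mult sq W_def)
  also have "\<dots> = (\<Sum>k\<in>J. \<Sum>m\<in>J. W k * W m * (x k * cnj (x k)))
      + (\<Sum>k\<in>J. \<Sum>m\<in>J. W k * W m * (x m * cnj (x m)))
      - (\<Sum>k\<in>J. \<Sum>m\<in>J. (W k * x k) * (W m * cnj (x m)))
      - (\<Sum>k\<in>J. \<Sum>m\<in>J. (W m * x m) * (W k * cnj (x k)))"
    by (simp add: sum.distrib sum_subtractf algebra_simps)
  also have "(\<Sum>k\<in>J. \<Sum>m\<in>J. W k * W m * (x m * cnj (x m)))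
      = (\<Sum>k\<in>J. \<Sum>m\<in>J. W k * W m * (x k * cnj (x k)))"
    by (subst sum.swap) (simp add: mult_ac)
  also have "(\<Sum>k\<in>J. \<Sum>m\<in>J. (W m * x m) * (W k * cnj (x k)))
      = (\<Sum>k\<in>J. \<Sum>m\<in>J. (W k * x k) * (W m * cnj (x m)))"
    by (rule sum.swap)
  also have "(\<Sum>k\<in>J. \<Sum>m\<in>J. (W k * x k) * (W m * cnj (x m))) = S * cnj S"
    by (simp add: S_def W_def sum_product)
  also have "(\<Sum>k\<in>J. \<Sum>m\<in>J. W k * W m * (x k * cnj (x k)))
      = (\<Sum>m\<in>J. W m) * (\<Sum>k\<in>J. W k * (x k * cnj (x k)))"
    by (simp add: sum_distrib_left sum_distrib_right mult_ac)
  finally have "complex_of_real (\<Sum>k\<in>J. \<Sum>m\<in>J. w k * w m * (cmod (x k - x m))^2)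
      = 2 * (\<Sum>m\<in>J. W m) * (\<Sum>k\<in>J. W k * (x k * cnj (x k))) - 2 * (S * cnj S)"
    by simp
  also have "\<dots> = complex_of_real (2 * (\<Sum>k\<in>J. w k) * (\<Sum>k\<in>J. w k * (cmod (x k))^2)
      - 2 * (cmod (\<Sum>k\<in>J. of_real (w k) * x k))^2)"
    by (simp only: S_def W_def of_real_diff of_real_mult of_real_numeral of_real_sum sq)
  finally show ?thesis
    by (simp only: of_real_eq_iff)
qed

lemma weighted_Cauchy_Schwarz:
  fixes w :: "'i \<Rightarrow> real" and x :: "'i \<Rightarrow> complex"
  assumes "\<And>k. k \<in> J \<Longrightarrow> 0 \<le> w k"
  shows "(cmod (\<Sum>k\<in>J. of_real (w k) * x k))^2 \<le> (\<Sum>k\<in>J. w k) * (\<Sum>k\<in>J. w k * (cmod (x k))^2)"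
proof -
  have "0 \<le> (\<Sum>k\<in>J. \<Sum>m\<in>J. w k * w m * (cmod (x k - x m))^2)"
    using assms by (intro sum_nonneg) auto
  then show ?thesis
    unfolding weighted_variance_identity by simp
qed

lemma sum_pivot_elimination:
  fixes c :: "'i \<Rightarrow> nat \<Rightarrow> 'a::field"
  assumes "finite A" "p \<in> A" "c p N \<noteq> 0"
  shows "(\<Sum>i\<in>A. (if i = p then - (\<Sum>i\<in>A - {p}. d i * c i N) / c p N else d i) * c i l)
    = (\<Sum>i\<in>A - {p}. d i * (c i l - c i N / c p N * c p l))"
proof -
  let ?d = "\<lambda>i. if i = p then - (\<Sum>i\<in>A - {p}. d i * c i N) / c p N else d i"
  have "(\<Sum>i\<in>A. ?d i * c i l) = ?d p * c p l + (\<Sum>i\<in>A - {p}. ?d i * c i l)"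
    using sum.remove[OF assms(1,2)] .
  also have "(\<Sum>i\<in>A - {p}. ?d i * c i l) = (\<Sum>i\<in>A - {p}. d i * c i l)"
    by (rule sum.cong) auto
  also have "?d p * c p l + \<dots> = (\<Sum>i\<in>A - {p}. d i * c i l) - (\<Sum>i\<in>A - {p}. d i * c i N) * (c p l / c p N)"
    using assms(3) by (simp add: field_simps)
  also have "\<dots> = (\<Sum>i\<in>A - {p}. d i * c i l - d i * c i N * (c p l / c p N))"
    by (simp add: sum_subtractf sum_distrib_right sum_divide_distrib)
  also have "\<dots> = (\<Sum>i\<in>A - {p}. d i * (c i l - c i N / c p N * c p l))"
    by (rule sum.cong) (auto simp: algebra_simps)
  finally show ?thesis .
qed

lemma exists_nontrivial_vanishing_combination:
  fixes c :: "'i \<Rightarrow> nat \<Rightarrow> 'a::field"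
  assumes "finite A" "N < card A"
  shows "\<exists>d. (\<exists>i\<in>A. d i \<noteq> 0) \<and> (\<forall>l<N. (\<Sum>i\<in>A. d i * c i l) = 0)"
  using assms
proof (induction N arbitrary: A c)
  case 0
  then obtain i where "i \<in> A"
    by fastforce
  then show ?case
    by (intro exI[of _ "\<lambda>_. 1"]) auto
next
  case (Suc N)
  show ?case
  proof (cases "\<exists>p\<in>A. c p N \<noteq> 0")
    case False
    obtain d where "\<exists>i\<in>A. d i \<noteq> 0" "\<forall>l<N. (\<Sum>i\<in>A. d i * c i l) = 0"
      using Suc.IH[of A c] Suc.prems by auto
    then show ?thesis
      using False by (intro exI[of _ d]) (auto simp: less_Suc_eq)
  next
    case True
    then obtain p where p: "p \<in> A" "c p N \<noteq> 0"
      by blast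
    have "finite (A - {p})" "N < card (A - {p})"
      using Suc.prems p by (simp_all add: card_Diff_singleton)
    then obtain d where d: "\<exists>i\<in>A - {p}. d i \<noteq> 0"
      "\<And>l. l < N \<Longrightarrow> (\<Sum>i\<in>A - {p}. d i * (c i l - c i N / c p N * c p l)) = 0"
      using Suc.IH[of "A - {p}" "\<lambda>i l. c i l - c i N / c p N * c p l"] by blast
    let ?d = "\<lambda>i. if i = p then - (\<Sum>i\<in>A - {p}. d i * c i N) / c p N else d i"
    have "(\<Sum>i\<in>A. ?d i * c i l) = 0" if "l < Suc N" for l
      using that d(2)[of l] p(2)
      by (cases "l < N") (simp_all add: sum_pivot_elimination[of A p c N, OF Suc.prems(1) p] less_Suc_eq)
    moreover have "\<exists>i\<in>A. ?d i \<noteq> 0"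
      using d(1) by auto
    ultimately show ?thesis
      by (intro exI[of _ ?d]) blast
  qed
qed

lemma norm_sum_sq_single_nonzero:
  fixes x :: "'i \<Rightarrow> 'a::real_normed_vector"
  assumes "finite A" and single: "\<And>i i'. i \<in> A \<Longrightarrow> i' \<in> A \<Longrightarrow> x i \<noteq> 0 \<Longrightarrow> x i' \<noteq> 0 \<Longrightarrow> i = i'"
  shows "(norm (\<Sum>i\<in>A. x i))^2 = (\<Sum>i\<in>A. (norm (x i))^2)"
proof (cases "\<exists>i\<in>A. x i \<noteq> 0")
  case True
  then obtain i where i: "i \<in> A" "x i \<noteq> 0"
    by blast
  then have "\<forall>i'\<in>A - {i}. x i' = 0"
    using single by blast
  then have "(\<Sum>i\<in>A. x i) = x i" "(\<Sum>i\<in>A. (norm (x i))^2) = (norm (x i))^2"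
    using sum.remove[OF assms(1) i(1), of x] sum.remove[OF assms(1) i(1), of "\<lambda>i. (norm (x i))^2"]
    by simp_all
  then show ?thesis
    by simp
qed simp

section \<open>Operators on \<open>\<ell>\<^sup>2\<close>\<close>

lemma linear_op_add: "linear_op P \<Longrightarrow> l2 f \<Longrightarrow> l2 g \<Longrightarrow> P (\<lambda>k. f k + g k) = (\<lambda>k. P f k + P g k)"
  unfolding linear_op_def by blast

lemma linear_op_scale: "linear_op P \<Longrightarrow> l2 f \<Longrightarrow> P (\<lambda>k. c * f k) = (\<lambda>k. c * P f k)"
  unfolding linear_op_def by blast

lemma linear_op_sum:
  assumes lin: "linear_op P" and "finite A" and "\<And>i. i \<in> A \<Longrightarrow> l2 (g i)"
  shows "P (\<lambda>k. \<Sum>i\<in>A. d i * g i k) = (\<lambda>k. \<Sum>i\<in>A. d i * P (g i) k)"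
  using assms(2,3)
proof (induction A rule: finite_induct)
  case empty
  then show ?case
    using linear_op_scale[OF lin l2_zero, of 0] by simp
next
  case (insert x F)
  have "P (\<lambda>k. d x * g x k + (\<Sum>i\<in>F. d i * g i k))
      = (\<lambda>k. P (\<lambda>k. d x * g x k) k + P (\<lambda>k. \<Sum>i\<in>F. d i * g i k) k)"
    using insert.prems by (intro linear_op_add[OF lin] l2_scale l2_sum[OF insert.hyps(1)]) auto
  also have "P (\<lambda>k. d x * g x k) = (\<lambda>k. d x * P (g x) k)"
    using insert.prems by (intro linear_op_scale[OF lin]) auto
  finally show ?case
    using insert by simp
qed

lemma bounded_op_nonneg_bound:
  assumes "bounded_op T"
  obtains C where "0 \<le> C" "\<And>f. l2 f \<Longrightarrow> l2norm (T f) \<le> C * l2norm f"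
proof -
  obtain C where C: "\<And>f. l2 f \<Longrightarrow> l2norm (T f) \<le> C * l2norm f"
    using assms unfolding bounded_op_def by blast
  have "l2norm (T f) \<le> max C 0 * l2norm f" if "l2 f" for f
    using C[OF that] mult_right_mono[of C "max C 0" "l2norm f"] that by simp
  then show ?thesis
    using that[of "max C 0"] by simp
qed

lemma bounded_op_diff:
  assumes S: "bounded_op S" and T: "bounded_op T"
  shows "bounded_op (\<lambda>f k. S f k - T f k)"
proof -
  obtain CS CT where
    "\<And>f. l2 f \<Longrightarrow> l2norm (S f) \<le> CS * l2norm f" "\<And>f. l2 f \<Longrightarrow> l2norm (T f) \<le> CT * l2norm f"
    using bounded_op_nonneg_bound[OF S] bounded_op_nonneg_bound[OF T] by metis
  moreover have "\<And>f. l2 f \<Longrightarrow> l2 (S f)" "\<And>f. l2 f \<Longrightarrow> l2 (T f)"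
    using S T by (simp_all add: bounded_op_def)
  ultimately have "l2norm (\<lambda>k. S f k - T f k) \<le> (CS + CT) * l2norm f" if "l2 f" for f
    using l2norm_triangle_diff[of "S f" "T f"] that by (fastforce simp: distrib_right)
  then show ?thesis
    unfolding bounded_op_def using \<open>\<And>f. l2 f \<Longrightarrow> l2 (S f)\<close> \<open>\<And>f. l2 f \<Longrightarrow> l2 (T f)\<close>
    by (blast intro: l2_diff)
qed

lemma bdd_above_op_vals:
  assumes "bounded_op T"
  shows "bdd_above {l2norm (T f) | f. l2 f \<and> l2norm f \<le> 1}"
proof -
  obtain C where "0 \<le> C" "\<And>f. l2 f \<Longrightarrow> l2norm (T f) \<le> C * l2norm f"
    using bounded_op_nonneg_bound[OF assms] by blast
  then have "l2norm (T f) \<le> C" if "l2 f" "l2norm f \<le> 1" for f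
    using that mult_left_le[of "l2norm f" C] by fastforce
  then show ?thesis
    by (intro bdd_aboveI) blast
qed

lemma opnorm_upper:
  assumes "bounded_op T" "l2 f" "l2norm f \<le> 1"
  shows "l2norm (T f) \<le> opnorm T"
  unfolding opnorm_def using assms by (intro cSup_upper bdd_above_op_vals) auto

lemma opnorm_least:
  assumes "\<And>f. l2 f \<Longrightarrow> l2norm f \<le> 1 \<Longrightarrow> l2norm (T f) \<le> c"
  shows "opnorm T \<le> c"
proof -
  have "l2 (\<lambda>k. 0) \<and> l2norm (\<lambda>k. 0::complex) \<le> 1"
    by (simp add: l2norm_def)
  then show ?thesis
    unfolding opnorm_def using assms by (intro cSup_least) blast+
qed

lemma opnorm_nonneg:
  assumes "bounded_op T"
  shows "0 \<le> opnorm T"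
proof -
  have "l2 (T (\<lambda>k. 0))"
    using assms by (simp add: bounded_op_def)
  then have "0 \<le> l2norm (T (\<lambda>k. 0))"
    by simp
  also have "\<dots> \<le> opnorm T"
    using assms by (rule opnorm_upper) (simp_all add: l2norm_def)
  finally show ?thesis .
qed

section \<open>The weighted Cesaro operator\<close>

definition psum :: "(nat \<Rightarrow> complex) \<Rightarrow> nat \<Rightarrow> complex" where
  "psum f k = (\<Sum>j\<le>k. f j)"

definition weight :: "(nat \<Rightarrow> complex) \<Rightarrow> nat \<Rightarrow> real" where
  "weight \<alpha> k = (cmod (\<alpha> k))^2"

lemma weight_nonneg [simp]: "0 \<le> weight \<alpha> k"
  by (simp add: weight_def)

lemma Ralpha_psum: "Ralpha \<alpha> f k = \<alpha> k * psum f k"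
  by (simp add: Ralpha_def psum_def)

lemma norm_Ralpha_sq: "(cmod (Ralpha \<alpha> f k))^2 = weight \<alpha> k * (cmod (psum f k))^2"
  by (simp add: Ralpha_psum weight_def norm_mult power_mult_distrib)

lemma Ralpha_add: "Ralpha \<alpha> (\<lambda>k. f k + g k) = (\<lambda>k. Ralpha \<alpha> f k + Ralpha \<alpha> g k)"
  by (simp add: Ralpha_def sum.distrib distrib_left fun_eq_iff)

lemma Ralpha_scale: "Ralpha \<alpha> (\<lambda>k. c * f k) = (\<lambda>k. c * Ralpha \<alpha> f k)"
  by (simp add: Ralpha_def sum_distrib_left fun_eq_iff mult_ac)

lemma Ralpha_diff: "Ralpha \<alpha> (\<lambda>k. f k - g k) = (\<lambda>k. Ralpha \<alpha> f k - Ralpha \<alpha> g k)"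
  by (simp add: Ralpha_def sum_subtractf right_diff_distrib fun_eq_iff)

lemma psum_eq_zero_below: "\<forall>j. f j \<noteq> 0 \<longrightarrow> m \<le> j \<Longrightarrow> k < m \<Longrightarrow> psum f k = 0"
  unfolding psum_def by (rule sum.neutral) force

lemma psum_eq_zero_above:
  assumes "\<forall>j. f j \<noteq> 0 \<longrightarrow> j < e" "(\<Sum>j<e. f j) = 0" "e \<le> k"
  shows "psum f k = 0"
proof -
  have "psum f k = (\<Sum>j<e. f j)"
    unfolding psum_def by (rule sum.mono_neutral_right) (use assms in force)+
  then show ?thesis
    using assms by simp
qed

lemma linear_op_Ralpha_trunc: "linear_op (\<lambda>f. Ralpha \<alpha> (trunc N f))"
proof -
  have "trunc N (\<lambda>k. f k + g k) = (\<lambda>k. trunc N f k + trunc N g k)"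
    and "trunc N (\<lambda>k. c * f k) = (\<lambda>k. c * trunc N f k)" for f g c
    by (simp_all add: trunc_def fun_eq_iff)
  then show ?thesis
    by (simp add: linear_op_def Ralpha_add Ralpha_scale)
qed

lemma Ralpha_trunc_eq_sum:
  "Ralpha \<alpha> (trunc N f) = (\<lambda>k. \<Sum>i<N. f i * (if i \<le> k then \<alpha> k else 0))"
proof
  fix k
  have "(\<Sum>j\<le>k. trunc N f j) = (\<Sum>j\<in>{..k} \<inter> {..<N}. f j)"
    by (simp add: trunc_def sum.inter_restrict)
  also have "\<dots> = (\<Sum>i<N. if i \<le> k then f i else 0)"
    using sum.inter_restrict[of "{..<N}" f "{..k}"] by (simp add: Int_commute)
  finally have "(\<Sum>j\<le>k. trunc N f j) = (\<Sum>i<N. if i \<le> k then f i else 0)" .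
  then have "Ralpha \<alpha> (trunc N f) k = \<alpha> k * (\<Sum>i<N. if i \<le> k then f i else 0)"
    by (simp only: Ralpha_def)
  also have "\<dots> = (\<Sum>i<N. f i * (if i \<le> k then \<alpha> k else 0))"
    unfolding sum_distrib_left by (intro sum.cong refl) simp
  finally show "Ralpha \<alpha> (trunc N f) k = (\<Sum>i<N. f i * (if i \<le> k then \<alpha> k else 0))" .
qed

lemma mu_nonneg: "0 \<le> mu \<alpha> a b"
  by (simp add: mu_def sum_nonneg)

text \<open>By the variance identity, \<open>l(I, f)/\<mu>(I)\<close> is twice the \<open>\<mu>\<close>-variance of the partial sums of
  \<open>f\<close> over \<open>I\<close>.\<close>

lemma lI_variance_form:
  "lI \<alpha> a b f = 2 * mu \<alpha> a b * (\<Sum>k\<in>{a..b}. weight \<alpha> k * (cmod (\<Sum>j\<in>{Suc a..<Suc k}. f j))^2)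
     - 2 * (cmod (\<Sum>k\<in>{a..b}. of_real (weight \<alpha> k) * (\<Sum>j\<in>{Suc a..<Suc k}. f j)))^2"
proof -
  define P where "P k = (\<Sum>j\<in>{Suc a..<Suc k}. f j)" for k
  have increment: "(\<Sum>j\<in>{min k m + 1..max k m}. f j) = P (max k m) - P (min k m)"
    if "k \<in> {a..b}" "m \<in> {a..b}" for k m
  proof -
    have "{min k m + 1..max k m} = {Suc (min k m)..<Suc (max k m)}"
      by auto
    then show ?thesis
      using that sum_diff_nat_ivl[of "Suc a" "Suc (min k m)" "Suc (max k m)" f] by (simp add: P_def)
  qed
  have summand: "(cmod (\<alpha> k * \<alpha> m * (\<Sum>j\<in>{min k m + 1..max k m}. f j)))^2
      = weight \<alpha> k * weight \<alpha> m * (cmod (P k - P m))^2"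
    if "k \<in> {a..b}" "m \<in> {a..b}" for k m
  proof -
    have "cmod (P (max k m) - P (min k m)) = cmod (P k - P m)"
      by (cases "k \<le> m") (auto simp: max_def min_def norm_minus_commute)
    then show ?thesis
      using increment[OF that] by (simp add: weight_def norm_mult power_mult_distrib)
  qed
  have "lI \<alpha> a b f = (\<Sum>k\<in>{a..b}. \<Sum>m\<in>{a..b} - {k}. weight \<alpha> k * weight \<alpha> m * (cmod (P k - P m))^2)"
    unfolding lI_def by (intro sum.cong refl) (use summand in auto)
  also have "\<dots> = (\<Sum>k\<in>{a..b}. \<Sum>m\<in>{a..b}. weight \<alpha> k * weight \<alpha> m * (cmod (P k - P m))^2)"
  proof (rule sum.cong[OF refl])
    fix k assume "k \<in> {a..b}"
    then show "(\<Sum>m\<in>{a..b} - {k}. weight \<alpha> k * weight \<alpha> m * (cmod (P k - P m))^2)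
        = (\<Sum>m\<in>{a..b}. weight \<alpha> k * weight \<alpha> m * (cmod (P k - P m))^2)"
      using sum.remove[of "{a..b}" k "\<lambda>m. weight \<alpha> k * weight \<alpha> m * (cmod (P k - P m))^2"] by simp
  qed
  also have "\<dots> = 2 * mu \<alpha> a b * (\<Sum>k\<in>{a..b}. weight \<alpha> k * (cmod (P k))^2)
      - 2 * (cmod (\<Sum>k\<in>{a..b}. of_real (weight \<alpha> k) * P k))^2"
    unfolding weighted_variance_identity by (simp add: mu_def weight_def)
  finally show ?thesis
    by (simp add: P_def)
qed

definition LI_vals :: "(nat \<Rightarrow> complex) \<Rightarrow> nat \<Rightarrow> nat \<Rightarrow> real set" where
  "LI_vals \<alpha> a b = {lI \<alpha> a b f / mu \<alpha> a b | f.
      (\<forall>k. k \<notin> {a..b} \<longrightarrow> f k = 0) \<and> (\<Sum>k\<in>{a..b}. (cmod (f k))^2) \<le> 1}"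

lemma LI_eq: "LI \<alpha> a b = (if mu \<alpha> a b = 0 then 0 else sqrt (Sup (LI_vals \<alpha> a b)))"
  by (simp add: LI_def LI_vals_def)

lemma zero_in_LI_vals: "0 \<in> LI_vals \<alpha> a b"
proof -
  have "lI \<alpha> a b (\<lambda>j. 0) = 0"
    by (simp add: lI_def)
  then show ?thesis
    unfolding LI_vals_def by force
qed

section \<open>Tail norms of a bounded \<open>R\<^sub>\<alpha>\<close>\<close>

locale bounded_Ralpha =
  fixes \<alpha> :: "nat \<Rightarrow> complex" and C :: real
  assumes l2_alpha: "l2 \<alpha>"
    and l2_Ralpha: "\<And>f. l2 f \<Longrightarrow> l2 (Ralpha \<alpha> f)"
    and l2norm_Ralpha_le: "\<And>f. l2 f \<Longrightarrow> l2norm (Ralpha \<alpha> f) \<le> C * l2norm f"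
    and C_nonneg: "0 \<le> C"
begin

text \<open>\<open>tail_norm2 n\<close> is the squared norm of \<open>R\<^sub>\<alpha>\<close> on sequences vanishing below \<open>n\<close>, computed
  through the finite sections \<open>[n, K) \<rightarrow> [0, K)\<close>; its limit \<open>\<Gamma>\<close> turns out to be
  \<open>\<parallel>R\<^sub>\<alpha>\<parallel>\<^sub>e\<^sup>2 = \<L>\<^sup>2/2\<close>.\<close>

definition tail_vals :: "nat \<Rightarrow> real set" where
  "tail_vals n = {\<Sum>k<K. weight \<alpha> k * (cmod (psum f k))^2 | f K.
      (\<forall>j. f j \<noteq> 0 \<longrightarrow> n \<le> j \<and> j < K) \<and> (\<Sum>j<K. (cmod (f j))^2) \<le> 1}"

definition tail_norm2 :: "nat \<Rightarrow> real" where
  "tail_norm2 n = Sup (tail_vals n)"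

definition \<Gamma> :: real where
  "\<Gamma> = lim tail_norm2"

lemma summable_weight: "summable (weight \<alpha>)"
  using l2_alpha by (simp add: l2_def weight_def[abs_def])

lemma bounded_op_Ralpha: "bounded_op (Ralpha \<alpha>)"
  unfolding bounded_op_def using l2_Ralpha l2norm_Ralpha_le by blast

lemma sum_weight_psum_le: "l2 f \<Longrightarrow> (\<Sum>k<K. weight \<alpha> k * (cmod (psum f k))^2) \<le> (l2norm (Ralpha \<alpha> f))^2"
  using sum_le_l2norm_sq[OF l2_Ralpha] by (simp add: norm_Ralpha_sq)

lemma sum_weight_psum_le_C_sq:
  assumes "l2 f"
  shows "(\<Sum>k<K. weight \<alpha> k * (cmod (psum f k))^2) \<le> C^2 * (l2norm f)^2"
proof -
  have "(l2norm (Ralpha \<alpha> f))^2 \<le> (C * l2norm f)^2"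
    using l2norm_Ralpha_le[OF assms] l2_Ralpha[OF assms] by (simp add: power_mono)
  then show ?thesis
    using sum_weight_psum_le[OF assms, of K] by (simp add: power_mult_distrib)
qed

lemma tail_vals_le:
  assumes "x \<in> tail_vals n"
  shows "x \<le> C^2"
proof -
  obtain f K where x: "x = (\<Sum>k<K. weight \<alpha> k * (cmod (psum f k))^2)"
    and supp: "\<forall>j. f j \<noteq> 0 \<longrightarrow> n \<le> j \<and> j < K" and norm: "(\<Sum>j<K. (cmod (f j))^2) \<le> 1"
    using assms unfolding tail_vals_def by blast
  have "\<And>j. K \<le> j \<Longrightarrow> f j = 0"
    using supp by force
  note f = l2_finite_support[of K f, OF this]
  have "x \<le> C^2 * (l2norm f)^2"
    unfolding x by (rule sum_weight_psum_le_C_sq[OF f(1)])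
  also have "\<dots> \<le> C^2"
    using f(2) norm by (simp add: mult_left_le)
  finally show ?thesis .
qed

lemma zero_in_tail_vals: "0 \<in> tail_vals n"
  unfolding tail_vals_def by (rule CollectI, rule exI[of _ "\<lambda>j. 0"], rule exI[of _ 0]) simp

lemma bdd_above_tail_vals: "bdd_above (tail_vals n)"
  using tail_vals_le by (intro bdd_aboveI) blast

lemma tail_norm2_upper: "x \<in> tail_vals n \<Longrightarrow> x \<le> tail_norm2 n"
  unfolding tail_norm2_def by (rule cSup_upper[OF _ bdd_above_tail_vals])

lemma tail_norm2_nonneg: "0 \<le> tail_norm2 n"
  using tail_norm2_upper[OF zero_in_tail_vals] .

lemma tail_norm2_antimono:
  assumes "m \<le> n"
  shows "tail_norm2 n \<le> tail_norm2 m"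
proof -
  have "tail_vals n \<subseteq> tail_vals m"
    unfolding tail_vals_def using assms by force
  then show ?thesis
    unfolding tail_norm2_def using zero_in_tail_vals bdd_above_tail_vals by (intro cSup_subset_mono) auto
qed

lemma tail_norm2_approx:
  assumes "0 < e"
  obtains x where "x \<in> tail_vals n" "tail_norm2 n - e < x"
  using less_cSup_iff[OF _ bdd_above_tail_vals, of n "tail_norm2 n - e"] zero_in_tail_vals assms
  unfolding tail_norm2_def by force

lemma tail_norm2_tendsto: "tail_norm2 \<longlonglongrightarrow> \<Gamma>"
  and \<Gamma>_le_tail_norm2: "\<Gamma> \<le> tail_norm2 n"
proof -
  obtain L where "tail_norm2 \<longlonglongrightarrow> L" "\<forall>i. L \<le> tail_norm2 i"
    using decseq_convergent[of tail_norm2 0] tail_norm2_nonneg tail_norm2_antimono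
    by (auto simp: decseq_def)
  moreover from this have "\<Gamma> = L"
    unfolding \<Gamma>_def by (simp add: limI)
  ultimately show "tail_norm2 \<longlonglongrightarrow> \<Gamma>" "\<Gamma> \<le> tail_norm2 n"
    by auto
qed

lemma \<Gamma>_nonneg: "0 \<le> \<Gamma>"
  using tail_norm2_tendsto tail_norm2_nonneg by (intro LIMSEQ_le_const) auto

lemma exists_near_extremal_seq:
  assumes "0 < e"
  obtains f K where "\<forall>j. f j \<noteq> 0 \<longrightarrow> n \<le> j \<and> j < K" "n \<le> K" "(\<Sum>j<K. (cmod (f j))^2) \<le> 1"
    "tail_norm2 n - e < (\<Sum>k<K. weight \<alpha> k * (cmod (psum f k))^2)"
proof -
  obtain x where x: "x \<in> tail_vals n" "tail_norm2 n - e < x"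
    using tail_norm2_approx[OF assms] by blast
  then obtain f K0 where x_eq: "x = (\<Sum>k<K0. weight \<alpha> k * (cmod (psum f k))^2)"
    and supp: "\<forall>j. f j \<noteq> 0 \<longrightarrow> n \<le> j \<and> j < K0" and norm: "(\<Sum>j<K0. (cmod (f j))^2) \<le> 1"
    unfolding tail_vals_def by blast
  define K where "K = max K0 n"
  have "(\<Sum>j<K. (cmod (f j))^2) = (\<Sum>j<K0. (cmod (f j))^2)"
    by (rule sum.mono_neutral_right) (use supp in \<open>auto simp: K_def\<close>)
  moreover have "x \<le> (\<Sum>k<K. weight \<alpha> k * (cmod (psum f k))^2)"
    unfolding x_eq by (rule sum_mono2) (auto simp: K_def)
  moreover have "\<forall>j. f j \<noteq> 0 \<longrightarrow> n \<le> j \<and> j < K"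
    using supp by (fastforce simp: K_def)
  ultimately show ?thesis
    using that[of f K] x(2) norm by (simp add: K_def)
qed

lemma sum_weight_psum_le_tail_norm2:
  assumes supp: "\<forall>j. f j \<noteq> 0 \<longrightarrow> n \<le> j \<and> j < K"
  shows "(\<Sum>k<K. weight \<alpha> k * (cmod (psum f k))^2) \<le> tail_norm2 n * (\<Sum>j<K. (cmod (f j))^2)"
proof (cases "(\<Sum>j<K. (cmod (f j))^2) = 0")
  case True
  then have "\<forall>j<K. f j = 0"
    by (simp add: sum_nonneg_eq_0_iff)
  then have "\<forall>j. f j = 0"
    using supp by blast
  then show ?thesis
    by (simp add: psum_def)
next
  case False
  define s where "s = (\<Sum>j<K. (cmod (f j))^2)"
  have s: "0 < s"
    using False unfolding s_def by (simp add: order_le_neq_trans sum_nonneg)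
  define g where "g j = f j / complex_of_real (sqrt s)" for j
  have psum_g: "psum g k = psum f k / complex_of_real (sqrt s)" for k
    by (simp add: psum_def g_def sum_divide_distrib)
  have "(\<Sum>j<K. (cmod (g j))^2) \<le> 1"
    using s by (simp add: g_def s_def norm_divide power_divide sum_divide_distrib[symmetric])
  moreover have "\<forall>j. g j \<noteq> 0 \<longrightarrow> n \<le> j \<and> j < K"
    using supp by (simp add: g_def)
  ultimately have "(\<Sum>k<K. weight \<alpha> k * (cmod (psum g k))^2) \<in> tail_vals n"
    unfolding tail_vals_def by blast
  then have "(\<Sum>k<K. weight \<alpha> k * (cmod (psum g k))^2) \<le> tail_norm2 n"
    by (rule tail_norm2_upper)
  moreover have "(\<Sum>k<K. weight \<alpha> k * (cmod (psum g k))^2) = (\<Sum>k<K. weight \<alpha> k * (cmod (psum f k))^2) / s"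
    using s by (simp add: psum_g norm_divide power_divide sum_divide_distrib)
  ultimately show ?thesis
    using s by (simp add: s_def pos_divide_le_eq mult.commute)
qed

lemma l2norm_Ralpha_tail_sq_le:
  assumes u: "l2 u" and vanish: "\<And>j. j < N \<Longrightarrow> u j = 0"
  shows "(l2norm (Ralpha \<alpha> u))^2 \<le> tail_norm2 N * (l2norm u)^2"
proof -
  have "(\<Sum>k<K. (cmod (Ralpha \<alpha> u k))^2) \<le> tail_norm2 N * (l2norm u)^2" for K
  proof -
    have psum_trunc: "k < K \<Longrightarrow> psum (trunc K u) k = psum u k" for k
      unfolding psum_def trunc_def by (rule sum.cong) auto
    have "(\<Sum>k<K. (cmod (Ralpha \<alpha> u k))^2) = (\<Sum>k<K. weight \<alpha> k * (cmod (psum (trunc K u) k))^2)"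
      by (simp add: norm_Ralpha_sq psum_trunc)
    also have "\<dots> \<le> tail_norm2 N * (\<Sum>j<K. (cmod (trunc K u j))^2)"
      by (rule sum_weight_psum_le_tail_norm2) (auto simp: trunc_def vanish not_less[symmetric])
    also have "\<dots> \<le> tail_norm2 N * (l2norm u)^2"
      using sum_le_l2norm_sq[OF u] tail_norm2_nonneg by (simp add: trunc_def mult_left_mono)
    finally show ?thesis .
  qed
  then have "(\<Sum>k. (cmod (Ralpha \<alpha> u k))^2) \<le> tail_norm2 N * (l2norm u)^2"
    using l2_Ralpha[OF u] by (intro suminf_le_const) (auto simp: l2_def)
  then show ?thesis
    using l2norm_sq[OF l2_Ralpha[OF u]] by simp
qed

lemma l2norm_Ralpha_tail_le:
  assumes u: "l2 u" and c: "l2norm u \<le> c"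
  shows "l2norm (Ralpha \<alpha> (tail N u)) \<le> sqrt (tail_norm2 N) * c"
proof -
  have c0: "0 \<le> c"
    using c l2norm_nonneg[OF u] by linarith
  have tail_le: "l2norm (tail N u) \<le> c"
    using l2norm_tail_le[OF u, of N] c by linarith
  have "(l2norm (Ralpha \<alpha> (tail N u)))^2 \<le> tail_norm2 N * (l2norm (tail N u))^2"
    by (rule l2norm_Ralpha_tail_sq_le[OF l2_tail[OF u]]) (simp add: tail_def)
  also have "\<dots> \<le> tail_norm2 N * c^2"
    by (rule mult_left_mono[OF power_mono[OF tail_le]]) (simp_all add: l2_tail[OF u] tail_norm2_nonneg)
  also have "\<dots> = (sqrt (tail_norm2 N) * c)^2"
    using tail_norm2_nonneg by (simp add: power_mult_distrib)
  finally show ?thesis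
    by (rule power2_le_imp_le) (simp add: c0 tail_norm2_nonneg)
qed

lemma l2norm_Ralpha_trunc_le:
  "l2norm (Ralpha \<alpha> (trunc N u)) \<le> sqrt (suminf (weight \<alpha>)) * (\<Sum>j<N. cmod (u j))"
proof -
  define S where "S = (\<Sum>j<N. cmod (u j))"
  have S: "0 \<le> S"
    by (simp add: S_def sum_nonneg)
  have "cmod (psum (trunc N u) k) \<le> S" for k
  proof -
    have "cmod (psum (trunc N u) k) \<le> (\<Sum>j\<le>k. cmod (trunc N u j))"
      unfolding psum_def by (rule norm_sum)
    also have "\<dots> = (\<Sum>j\<in>{..k} \<inter> {..<N}. cmod (u j))"
      by (simp add: trunc_def sum.inter_restrict if_distrib cong: if_cong)
    also have "\<dots> \<le> S"
      unfolding S_def by (rule sum_mono2) auto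
    finally show ?thesis .
  qed
  then have "(cmod (Ralpha \<alpha> (trunc N u) k))^2 \<le> weight \<alpha> k * S^2" for k
    unfolding norm_Ralpha_sq by (intro mult_left_mono power_mono) auto
  then have "(\<Sum>k. (cmod (Ralpha \<alpha> (trunc N u) k))^2) \<le> (\<Sum>k. weight \<alpha> k * S^2)"
    using l2_Ralpha[OF l2_trunc] summable_weight
    by (intro suminf_le) (auto simp: l2_def intro: summable_mult2)
  also have "\<dots> = suminf (weight \<alpha>) * S^2"
    by (rule suminf_mult2[OF summable_weight, symmetric])
  finally have "l2norm (Ralpha \<alpha> (trunc N u)) \<le> sqrt (suminf (weight \<alpha>) * S^2)"
    unfolding l2norm_def by (rule real_sqrt_le_mono)
  then show ?thesis
    using S by (simp add: real_sqrt_mult S_def)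
qed

section \<open>The limit of \<open>L([n, \<infinity>))\<close>\<close>

lemma sum_weight_partial_sums_le_tail_norm2:
  assumes supp: "\<forall>k. k \<notin> {n..b} \<longrightarrow> f k = 0" and norm: "(\<Sum>k\<in>{n..b}. (cmod (f k))^2) \<le> 1"
  shows "(\<Sum>k\<in>{n..b}. weight \<alpha> k * (cmod (\<Sum>j\<in>{Suc n..<Suc k}. f j))^2) \<le> tail_norm2 (Suc n)"
proof -
  define g where "g j = (if j \<in> {Suc n..b} then f j else 0)" for j
  have "(\<Sum>j<Suc b. (cmod (g j))^2) = (\<Sum>j\<in>{Suc n..b}. (cmod (f j))^2)"
    by (rule sum.mono_neutral_cong_right) (auto simp: g_def)
  also have "\<dots> \<le> (\<Sum>j\<in>{n..b}. (cmod (f j))^2)"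
    by (rule sum_mono2) auto
  finally have "(\<Sum>j<Suc b. (cmod (g j))^2) \<le> 1"
    using norm by simp
  moreover have "\<forall>j. g j \<noteq> 0 \<longrightarrow> Suc n \<le> j \<and> j < Suc b"
    by (auto simp: g_def)
  ultimately have "(\<Sum>k<Suc b. weight \<alpha> k * (cmod (psum g k))^2) \<in> tail_vals (Suc n)"
    unfolding tail_vals_def by blast
  moreover have "psum g k = (\<Sum>j\<in>{Suc n..<Suc k}. f j)" if "k \<in> {n..b}" for k
    unfolding psum_def by (rule sum.mono_neutral_cong_right) (use that in \<open>auto simp: g_def\<close>)
  then have "(\<Sum>k\<in>{n..b}. weight \<alpha> k * (cmod (\<Sum>j\<in>{Suc n..<Suc k}. f j))^2)
      = (\<Sum>k\<in>{n..b}. weight \<alpha> k * (cmod (psum g k))^2)"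
    by (intro sum.cong refl) simp
  moreover have "\<dots> \<le> (\<Sum>k<Suc b. weight \<alpha> k * (cmod (psum g k))^2)"
    by (rule sum_mono2) auto
  ultimately show ?thesis
    using tail_norm2_upper by fastforce
qed

lemma LI_vals_le:
  assumes "x \<in> LI_vals \<alpha> n b"
  shows "x \<le> 2 * tail_norm2 (Suc n)"
proof -
  obtain f where x: "x = lI \<alpha> n b f / mu \<alpha> n b" and supp: "\<forall>k. k \<notin> {n..b} \<longrightarrow> f k = 0"
    and norm: "(\<Sum>k\<in>{n..b}. (cmod (f k))^2) \<le> 1"
    using assms unfolding LI_vals_def by blast
  show ?thesis
  proof (cases "mu \<alpha> n b = 0")
    case True
    then show ?thesis
      using tail_norm2_nonneg by (simp add: x)
  next
    case False
    then have mu: "0 < mu \<alpha> n b"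
      using mu_nonneg by (simp add: order_le_neq_trans)
    have "lI \<alpha> n b f \<le> 2 * mu \<alpha> n b * (\<Sum>k\<in>{n..b}. weight \<alpha> k * (cmod (\<Sum>j\<in>{Suc n..<Suc k}. f j))^2)"
      unfolding lI_variance_form by simp
    also have "\<dots> \<le> 2 * mu \<alpha> n b * tail_norm2 (Suc n)"
      using sum_weight_partial_sums_le_tail_norm2[OF supp norm] mu by simp
    finally show ?thesis
      using mu unfolding x by (simp add: divide_le_eq mult_ac)
  qed
qed

lemma bdd_above_LI_vals: "bdd_above (LI_vals \<alpha> n b)"
  using LI_vals_le by (intro bdd_aboveI) blast

lemma LI_nonneg: "0 \<le> LI \<alpha> n b"
  using cSup_upper[OF zero_in_LI_vals bdd_above_LI_vals] by (simp add: LI_eq)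

lemma LI_le: "LI \<alpha> n b \<le> sqrt (2 * tail_norm2 (Suc n))"
proof -
  have "Sup (LI_vals \<alpha> n b) \<le> 2 * tail_norm2 (Suc n)"
    using zero_in_LI_vals LI_vals_le by (intro cSup_least) blast+
  then show ?thesis
    using tail_norm2_nonneg by (simp add: LI_eq)
qed

lemma LI_sq: "mu \<alpha> n b \<noteq> 0 \<Longrightarrow> (LI \<alpha> n b)^2 = Sup (LI_vals \<alpha> n b)"
  using cSup_upper[OF zero_in_LI_vals bdd_above_LI_vals] by (simp add: LI_eq)

lemma lI_div_mu_le_LI_sq:
  assumes "\<forall>k. k \<notin> {a..b} \<longrightarrow> f k = 0" "(\<Sum>k\<in>{a..b}. (cmod (f k))^2) \<le> 1" "mu \<alpha> a b \<noteq> 0"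
  shows "lI \<alpha> a b f / mu \<alpha> a b \<le> (LI \<alpha> a b)^2"
proof -
  have "lI \<alpha> a b f / mu \<alpha> a b \<in> LI_vals \<alpha> a b"
    unfolding LI_vals_def using assms(1,2) by blast
  then show ?thesis
    using LI_sq[OF assms(3)] cSup_upper[OF _ bdd_above_LI_vals] by simp
qed

lemma bdd_above_LI: "bdd_above {LI \<alpha> n b | b. n \<le> b}"
  using LI_le by (intro bdd_aboveI) blast

lemma Ltail_le: "Ltail \<alpha> n \<le> sqrt (2 * tail_norm2 (Suc n))"
  unfolding Ltail_def by (rule cSup_least) (use LI_le in auto)

lemma LI_le_Ltail: "n \<le> b \<Longrightarrow> LI \<alpha> n b \<le> Ltail \<alpha> n"
  unfolding Ltail_def by (rule cSup_upper[OF _ bdd_above_LI]) auto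

lemma norm_weighted_psum_sq_le:
  assumes "l2 f" "(l2norm f)^2 \<le> 1"
  shows "(cmod (\<Sum>k\<in>{m..b}. of_real (weight \<alpha> k) * psum f k))^2 \<le> (\<Sum>k\<in>{m..b}. weight \<alpha> k) * C^2"
proof -
  have "(\<Sum>k\<in>{m..b}. weight \<alpha> k * (cmod (psum f k))^2) \<le> (\<Sum>k<Suc b. weight \<alpha> k * (cmod (psum f k))^2)"
    by (rule sum_mono2) auto
  also have "\<dots> \<le> C^2 * (l2norm f)^2"
    by (rule sum_weight_psum_le_C_sq[OF assms(1)])
  also have "\<dots> \<le> C^2"
    using assms(2) by (simp add: mult_left_le)
  finally show ?thesis
    using weighted_Cauchy_Schwarz[of "{m..b}" "weight \<alpha>" "psum f"]
    by (meson mult_left_mono order_trans sum_nonneg weight_nonneg)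
qed

text \<open>Only the mean term of the variance form can make \<open>l\<close> small, and by Cauchy-Schwarz it is
  controlled by the weight of \<open>[m, b]\<close>.\<close>

lemma LI_sq_lower_bound:
  assumes nm: "n < m" and supp: "\<forall>j. f j \<noteq> 0 \<longrightarrow> m \<le> j \<and> j < K"
    and norm: "(\<Sum>j<K. (cmod (f j))^2) \<le> 1" and Kb: "K \<le> b" and mu: "0 < mu \<alpha> n b"
    and small: "(\<Sum>k\<in>{m..b}. weight \<alpha> k) \<le> \<eta> * mu \<alpha> n b"
  shows "2 * (\<Sum>k<K. weight \<alpha> k * (cmod (psum f k))^2) - 2 * C^2 * \<eta> \<le> (LI \<alpha> n b)^2"
proof -
  have psum_eq: "(\<Sum>j\<in>{Suc n..<Suc k}. f j) = psum f k" for k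
    unfolding psum_def by (rule sum.mono_neutral_left) (use supp nm in \<open>auto simp: not_less_eq_eq\<close>)
  have psum_below: "k < m \<Longrightarrow> psum f k = 0" for k
    using supp by (intro psum_eq_zero_below[of f m]) auto
  define A where "A = (\<Sum>k\<in>{n..b}. weight \<alpha> k * (cmod (psum f k))^2)"
  define B where "B = (\<Sum>k\<in>{m..b}. of_real (weight \<alpha> k) * psum f k)"
  have "(\<Sum>k<K. weight \<alpha> k * (cmod (psum f k))^2) = (\<Sum>k\<in>{m..<K}. weight \<alpha> k * (cmod (psum f k))^2)"
    by (rule sum.mono_neutral_right) (auto simp: psum_below)
  also have "\<dots> \<le> A"
    unfolding A_def by (rule sum_mono2) (use nm Kb in auto)
  finally have A_ge: "(\<Sum>k<K. weight \<alpha> k * (cmod (psum f k))^2) \<le> A" .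
  have "(cmod B)^2 \<le> C^2 * (\<eta> * mu \<alpha> n b)"
    unfolding B_def using norm_weighted_psum_sq_le[of f m b] l2_finite_support[of K f] supp norm
      mult_left_mono[OF small, of "C^2"] by (force simp: mult.commute)
  then have "(cmod B)^2 / mu \<alpha> n b \<le> C^2 * \<eta>"
    using mu by (simp add: divide_le_eq mult.assoc)
  moreover have "(\<Sum>k\<in>{n..b}. of_real (weight \<alpha> k) * psum f k) = B"
    unfolding B_def by (rule sum.mono_neutral_right) (use nm in \<open>auto simp: psum_below\<close>)
  then have "lI \<alpha> n b f = 2 * mu \<alpha> n b * A - 2 * (cmod B)^2"
    by (simp only: lI_variance_form psum_eq A_def)
  then have "lI \<alpha> n b f / mu \<alpha> n b = 2 * A - 2 * ((cmod B)^2 / mu \<alpha> n b)"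
    using mu by (simp add: diff_divide_distrib)
  moreover have "lI \<alpha> n b f / mu \<alpha> n b \<le> (LI \<alpha> n b)^2"
  proof (rule lI_div_mu_le_LI_sq)
    show supp': "\<forall>k. k \<notin> {n..b} \<longrightarrow> f k = 0"
      using supp nm Kb by fastforce
    have "(\<Sum>k\<in>{n..b}. (cmod (f k))^2) = (\<Sum>j<K. (cmod (f j))^2)"
      by (rule sum.mono_neutral_cong) (use supp supp' in auto)
    then show "(\<Sum>k\<in>{n..b}. (cmod (f k))^2) \<le> 1"
      using norm by simp
  qed (use mu in simp)
  ultimately show ?thesis
    using A_ge by simp
qed

lemma tail_norm2_eq_0_if_alpha_vanishes:
  assumes "\<forall>j\<ge>n. \<alpha> j = 0"
  shows "tail_norm2 n = 0"
proof -
  have "x \<le> 0" if x_in: "x \<in> tail_vals n" for x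
  proof -
    obtain f K where x: "x = (\<Sum>k<K. weight \<alpha> k * (cmod (psum f k))^2)"
      and supp: "\<forall>j. f j \<noteq> 0 \<longrightarrow> n \<le> j \<and> j < K"
      using x_in unfolding tail_vals_def by blast
    have "weight \<alpha> k * (cmod (psum f k))^2 = 0" for k
      using assms psum_eq_zero_below[of f n k] supp by (cases "k < n") (auto simp: weight_def)
    then show ?thesis
      unfolding x by (simp only: sum.neutral_const sum.neutral)
  qed
  then have "tail_norm2 n \<le> 0"
    unfolding tail_norm2_def using zero_in_tail_vals by (intro cSup_least) blast+
  then show ?thesis
    using tail_norm2_nonneg[of n] by simp
qed

lemma exists_LI_sq_gt:
  assumes \<Gamma>: "0 < \<Gamma>" and \<delta>: "0 < \<delta>"
  shows "\<exists>b\<ge>n. 2 * \<Gamma> - \<delta> < (LI \<alpha> n b)^2"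
proof -
  obtain j0 where j0: "n \<le> j0" "\<alpha> j0 \<noteq> 0"
    using tail_norm2_eq_0_if_alpha_vanishes[of n] \<Gamma>_le_tail_norm2[of n] \<Gamma> by force
  define \<mu>0 where "\<mu>0 = weight \<alpha> j0"
  have \<mu>0: "0 < \<mu>0"
    using j0 by (simp add: \<mu>0_def weight_def)
  define \<eta> where "\<eta> = \<delta> / (4 * (1 + C^2))"
  have \<eta>: "0 < \<eta>" "2 * \<eta> * (1 + C^2) < \<delta>"
    using \<delta> by (simp_all add: \<eta>_def add_pos_nonneg field_simps)
  have "0 < \<eta> * \<mu>0"
    using \<eta>(1) \<mu>0 by simp
  then obtain N where N: "\<forall>m\<ge>N. \<forall>b. (\<Sum>k\<in>{m..<b}. weight \<alpha> k) < \<eta> * \<mu>0"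
    using eventually_block_sums_small[OF summable_weight weight_nonneg] by blast
  define m where "m = max N (Suc j0)"
  obtain f K where supp: "\<forall>j. f j \<noteq> 0 \<longrightarrow> m \<le> j \<and> j < K" and "m \<le> K"
    and norm: "(\<Sum>j<K. (cmod (f j))^2) \<le> 1"
    and energy: "tail_norm2 m - \<eta> < (\<Sum>k<K. weight \<alpha> k * (cmod (psum f k))^2)"
    by (rule exists_near_extremal_seq[OF \<eta>(1)])
  define x where "x = (\<Sum>k<K. weight \<alpha> k * (cmod (psum f k))^2)"
  define b where "b = K + j0"
  have mu_ge: "\<mu>0 \<le> mu \<alpha> n b"
    unfolding mu_def \<mu>0_def weight_def by (rule member_le_sum) (use j0 in \<open>auto simp: b_def\<close>)
  have small: "(\<Sum>k\<in>{m..b}. weight \<alpha> k) \<le> \<eta> * mu \<alpha> n b"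
  proof -
    have "(\<Sum>k\<in>{m..b}. weight \<alpha> k) < \<eta> * \<mu>0"
      using N[rule_format, of m "Suc b"] by (simp add: m_def atLeastLessThanSuc_atLeastAtMost)
    also have "\<dots> \<le> \<eta> * mu \<alpha> n b"
      using mu_ge \<eta>(1) by simp
    finally show ?thesis
      by simp
  qed
  have "2 * x - 2 * C^2 * \<eta> \<le> (LI \<alpha> n b)^2"
    using LI_sq_lower_bound[OF _ supp norm _ _ small] \<mu>0 mu_ge j0 unfolding x_def by (simp add: m_def b_def)
  moreover have "\<Gamma> \<le> tail_norm2 m"
    by (rule \<Gamma>_le_tail_norm2)
  ultimately show ?thesis
    using energy[folded x_def] \<eta>(2) j0(1) by (intro exI[of _ b]) (auto simp: b_def algebra_simps)
qed

lemma sqrt_2\<Gamma>_le_Ltail: "sqrt (2 * \<Gamma>) \<le> Ltail \<alpha> n"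
proof -
  have Ltail: "0 \<le> Ltail \<alpha> n"
    using LI_le_Ltail[of n n] LI_nonneg[of n n] by simp
  have "2 * \<Gamma> \<le> (Ltail \<alpha> n)^2"
  proof (cases "\<Gamma> = 0")
    case False
    show ?thesis
    proof (rule field_le_epsilon)
      fix \<delta> :: real
      assume "0 < \<delta>"
      then obtain b where "n \<le> b" "2 * \<Gamma> - \<delta> < (LI \<alpha> n b)^2"
        using exists_LI_sq_gt[of \<delta> n] \<Gamma>_nonneg False by auto
      moreover from this have "(LI \<alpha> n b)^2 \<le> (Ltail \<alpha> n)^2"
        using LI_le_Ltail LI_nonneg by (simp add: power_mono)
      ultimately show "2 * \<Gamma> \<le> (Ltail \<alpha> n)^2 + \<delta>"
        by simp
    qed
  qed simp
  then show ?thesis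
    using Ltail by (simp add: real_le_lsqrt)
qed

lemma Ltail_tendsto: "(\<lambda>n. Ltail \<alpha> n) \<longlonglongrightarrow> sqrt (2 * \<Gamma>)"
proof (rule tendsto_sandwich[of "\<lambda>n. sqrt (2 * \<Gamma>)" _ _ "\<lambda>n. sqrt (2 * tail_norm2 (Suc n))"])
  have "(\<lambda>n. tail_norm2 (Suc n)) \<longlonglongrightarrow> \<Gamma>"
    using tail_norm2_tendsto by (rule LIMSEQ_Suc)
  then show "(\<lambda>n. sqrt (2 * tail_norm2 (Suc n))) \<longlonglongrightarrow> sqrt (2 * \<Gamma>)"
    by (intro tendsto_intros)
qed (use sqrt_2\<Gamma>_le_Ltail Ltail_le in auto)

section \<open>Finite sections: the upper bound and compactness\<close>

lemma finite_rank_Ralpha_trunc: "finite_rank (\<lambda>f. Ralpha \<alpha> (trunc N f))"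
proof -
  have "bounded_op (\<lambda>f. Ralpha \<alpha> (trunc N f))"
    unfolding bounded_op_def
  proof (intro conjI allI impI exI)
    fix f :: "nat \<Rightarrow> complex"
    show "l2 (Ralpha \<alpha> (trunc N f))"
      by (rule l2_Ralpha[OF l2_trunc])
    assume "l2 f"
    then show "l2norm (Ralpha \<alpha> (trunc N f)) \<le> C * l2norm f"
      using l2norm_Ralpha_le[OF l2_trunc, of N f] l2norm_trunc_le[of f N] C_nonneg
      by (meson mult_left_mono order_trans)
  qed
  moreover have "l2 (\<lambda>k. if i \<le> k then \<alpha> k else 0)" for i
    using summable_weight unfolding l2_def
    by (rule summable_comparison_test'[where N = 0]) (simp add: weight_def)
  ultimately show ?thesis
    unfolding finite_rank_def using linear_op_Ralpha_trunc Ralpha_trunc_eq_sum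
    by (intro conjI exI[of _ N] exI[of _ "\<lambda>i k. if i \<le> k then \<alpha> k else 0"]) auto
qed

lemma opnorm_Ralpha_minus_trunc_le:
  "opnorm (\<lambda>f k. Ralpha \<alpha> f k - Ralpha \<alpha> (trunc N f) k) \<le> sqrt (tail_norm2 N)"
proof (rule opnorm_least)
  fix f
  assume f: "l2 f" "l2norm f \<le> 1"
  have "(\<lambda>k. Ralpha \<alpha> f k - Ralpha \<alpha> (trunc N f) k) = Ralpha \<alpha> (tail N f)"
    using trunc_add_tail[of N f] Ralpha_add[of \<alpha> "trunc N f" "tail N f"] by (simp add: fun_eq_iff)
  moreover have "(l2norm (Ralpha \<alpha> (tail N f)))^2 \<le> tail_norm2 N"
  proof -
    have "(l2norm (Ralpha \<alpha> (tail N f)))^2 \<le> tail_norm2 N * (l2norm (tail N f))^2"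
      by (rule l2norm_Ralpha_tail_sq_le[OF l2_tail[OF f(1)]]) (simp add: tail_def)
    also have "\<dots> \<le> tail_norm2 N"
      using l2norm_tail_le[OF f(1), of N] f l2_tail[OF f(1), of N] tail_norm2_nonneg
      by (simp add: mult_left_le power_le_one)
    finally show ?thesis .
  qed
  ultimately show "l2norm (\<lambda>k. Ralpha \<alpha> f k - Ralpha \<alpha> (trunc N f) k) \<le> sqrt (tail_norm2 N)"
    by (simp add: real_le_rsqrt)
qed

text \<open>When \<open>\<Gamma> = 0\<close>, \<open>R\<^sub>\<alpha>\<close> is a norm limit of the finite rank operators \<open>R\<^sub>\<alpha> \<circ> trunc N\<close>, so it maps
  bounded coordinatewise null sequences to norm null sequences.\<close>

lemma l2norm_Ralpha_tendsto_0:
  assumes \<Gamma>: "\<Gamma> = 0" and u: "\<And>m. l2 (u m)" "\<And>m. l2norm (u m) \<le> B"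
    and lim: "\<And>j. (\<lambda>m. u m j) \<longlonglongrightarrow> 0"
  shows "(\<lambda>m. l2norm (Ralpha \<alpha> (u m))) \<longlonglongrightarrow> 0"
proof (rule LIMSEQ_I)
  fix \<eta> :: real
  assume \<eta>: "0 < \<eta>"
  have "(\<lambda>N. sqrt (tail_norm2 N) * B) \<longlonglongrightarrow> 0"
    using tendsto_mult_right[OF tendsto_real_sqrt[OF tail_norm2_tendsto], of B] \<Gamma> by simp
  then obtain N where N: "sqrt (tail_norm2 N) * B < \<eta> / 2"
    using order_tendstoD(2)[of _ 0 sequentially "\<eta> / 2"] \<eta> by (auto simp: eventually_sequentially)
  have "(\<lambda>m. sqrt (suminf (weight \<alpha>)) * (\<Sum>j<N. cmod (u m j))) \<longlonglongrightarrow> 0"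
    by (intro tendsto_mult_right_zero tendsto_null_sum tendsto_norm_zero lim)
  then obtain m0 where m0: "\<And>m. m0 \<le> m \<Longrightarrow> sqrt (suminf (weight \<alpha>)) * (\<Sum>j<N. cmod (u m j)) < \<eta> / 2"
    using order_tendstoD(2)[of _ 0 sequentially "\<eta> / 2"] \<eta> by (auto simp: eventually_sequentially)
  have "l2norm (Ralpha \<alpha> (u m)) < \<eta>" if "m0 \<le> m" for m
  proof -
    have "Ralpha \<alpha> (u m) = (\<lambda>k. Ralpha \<alpha> (trunc N (u m)) k + Ralpha \<alpha> (tail N (u m)) k)"
      using Ralpha_add[of \<alpha> "trunc N (u m)" "tail N (u m)"] trunc_add_tail[of N "u m"] by simp
    then have "l2norm (Ralpha \<alpha> (u m)) \<le> l2norm (Ralpha \<alpha> (trunc N (u m))) + l2norm (Ralpha \<alpha> (tail N (u m)))"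
      using l2norm_triangle[OF l2_Ralpha[OF l2_trunc] l2_Ralpha[OF l2_tail[OF u(1)]]] by simp
    then show ?thesis
      using l2norm_Ralpha_trunc_le[of N "u m"] l2norm_Ralpha_tail_le[OF u(1)[of m] u(2)[of m], of N] m0[OF that] N
      by linarith
  qed
  then show "\<exists>m0. \<forall>m\<ge>m0. norm (l2norm (Ralpha \<alpha> (u m)) - 0) < \<eta>"
    using l2norm_nonneg[OF l2_Ralpha[OF u(1)]] by auto
qed

lemma \<Gamma>_eq_0_imp_compact:
  assumes \<Gamma>: "\<Gamma> = 0"
  shows "compact_op (Ralpha \<alpha>)"
  unfolding compact_op_def
proof (intro allI impI)
  fix F :: "nat \<Rightarrow> nat \<Rightarrow> complex" and B :: real
  assume "\<forall>m. l2 (F m) \<and> l2norm (F m) \<le> B"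
  then have F: "\<And>m. l2 (F m)" "\<And>m. l2norm (F m) \<le> B"
    by auto
  have "cmod (F m j) \<le> B" for m j
    using norm_le_l2norm[OF F(1)] F(2) order_trans by blast
  then obtain r \<phi> where r: "strict_mono r" and \<phi>: "\<And>j. (\<lambda>m. F (r m) j) \<longlonglongrightarrow> \<phi> j"
    using exists_coordinatewise_convergent_subseq by blast
  have \<phi>_l2: "l2 \<phi>" "l2norm \<phi> \<le> B"
    using l2_coordinatewise_limit[of "\<lambda>m. F (r m)" B \<phi>] F \<phi> by auto
  define u where "u m = (\<lambda>k. F (r m) k - \<phi> k)" for m
  have "(\<lambda>m. l2norm (Ralpha \<alpha> (u m))) \<longlonglongrightarrow> 0"
  proof (rule l2norm_Ralpha_tendsto_0[OF \<Gamma>])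
    show "l2 (u m)" "l2norm (u m) \<le> 2 * B" for m
      using l2_diff[OF F(1) \<phi>_l2(1)] l2norm_triangle_diff[OF F(1) \<phi>_l2(1), of "r m"] F(2)[of "r m"] \<phi>_l2(2)
      by (simp_all add: u_def)
    show "(\<lambda>m. u m j) \<longlonglongrightarrow> 0" for j
      unfolding u_def using tendsto_diff[OF \<phi>[of j] tendsto_const[of "\<phi> j"]] by simp
  qed
  moreover have "Ralpha \<alpha> (u m) = (\<lambda>k. Ralpha \<alpha> (F (r m)) k - Ralpha \<alpha> \<phi> k)" for m
    by (simp add: u_def Ralpha_diff)
  ultimately show "\<exists>g r. l2 g \<and> strict_mono r \<and> (\<lambda>m. l2norm (\<lambda>k. Ralpha \<alpha> (F (r m)) k - g k)) \<longlonglongrightarrow> 0"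
    using l2_Ralpha[OF \<phi>_l2(1)] r by auto
qed

end

section \<open>Zero-sum blocks: the lower bound and non-compactness\<close>

context bounded_Ralpha
begin

lemma sum_norm_sq_pos_if_energy_pos:
  assumes "\<And>j. e \<le> j \<Longrightarrow> f j = 0" "0 < (\<Sum>k<e. weight \<alpha> k * (cmod (psum f k))^2)"
  shows "0 < (\<Sum>j<e. (cmod (f j))^2)"
proof -
  have "l2 f" "(l2norm f)^2 = (\<Sum>j<e. (cmod (f j))^2)"
    using l2_finite_support[of e f] assms(1) by auto
  then have "0 < C^2 * (\<Sum>j<e. (cmod (f j))^2)"
    using assms(2) sum_weight_psum_le_C_sq[of f e] by simp
  then show ?thesis
    by (simp add: zero_less_mult_iff)
qed

text \<open>A near-extremal test sequence for \<open>tail_norm2 s\<close>, padded by a long constant run that makes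
  its total sum vanish at a small cost in norm; then \<open>R\<^sub>\<alpha>\<close> maps it into sequences supported
  in the same block.\<close>

lemma exists_block:
  assumes \<epsilon>: "0 < \<epsilon>" "\<epsilon> < \<Gamma>"
  shows "\<exists>f e. s < e \<and> (\<forall>j. f j \<noteq> 0 \<longrightarrow> s \<le> j \<and> j < e) \<and> (\<Sum>j<e. f j) = 0 \<and>
     0 < (\<Sum>j<e. (cmod (f j))^2) \<and>
     (\<Gamma> - \<epsilon>) * (\<Sum>j<e. (cmod (f j))^2) \<le> (\<Sum>k<e. weight \<alpha> k * (cmod (psum f k))^2)"
proof -
  obtain f0 K where supp0: "\<forall>j. f0 j \<noteq> 0 \<longrightarrow> s \<le> j \<and> j < K" and "s \<le> K"
    and norm0: "(\<Sum>j<K. (cmod (f0 j))^2) \<le> 1"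
    and energy0: "tail_norm2 s - \<epsilon> / 2 < (\<Sum>k<K. weight \<alpha> k * (cmod (psum f0 k))^2)"
    by (rule exists_near_extremal_seq[where e = "\<epsilon> / 2" and n = s]) (use \<epsilon> in simp)
  define x where "x = (\<Sum>k<K. weight \<alpha> k * (cmod (psum f0 k))^2)"
  have x: "\<Gamma> - \<epsilon> / 2 < x"
    using energy0 \<Gamma>_le_tail_norm2[of s] unfolding x_def by simp
  have "0 < \<epsilon> / (2 * \<Gamma>)"
    using \<epsilon> by simp
  then obtain e f where "K < e" "s < e" and f_low: "\<And>j. j < K \<Longrightarrow> f j = f0 j"
    and f_high: "\<And>j. e \<le> j \<Longrightarrow> f j = 0" and f_sum: "(\<Sum>j<e. f j) = 0"
    and f_norm: "(\<Sum>j<e. (cmod (f j))^2) \<le> (\<Sum>j<K. (cmod (f0 j))^2) + \<epsilon> / (2 * \<Gamma>)"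
    by (rule exists_zero_sum_extension[of _ K s f0]) (rule that)
  have f_supp: "\<forall>j. f j \<noteq> 0 \<longrightarrow> s \<le> j \<and> j < e"
  proof (intro allI impI)
    fix j
    assume "f j \<noteq> 0"
    then show "s \<le> j \<and> j < e"
      using f_low[of j] f_high[of j] supp0 \<open>s \<le> K\<close> by (cases "j < K") auto
  qed
  have "x = (\<Sum>k<K. weight \<alpha> k * (cmod (psum f k))^2)"
    unfolding x_def psum_def using f_low by (intro sum.cong refl) simp
  also have "\<dots> \<le> (\<Sum>k<e. weight \<alpha> k * (cmod (psum f k))^2)"
    using \<open>K < e\<close> by (intro sum_mono2) auto
  finally have energy: "x \<le> (\<Sum>k<e. weight \<alpha> k * (cmod (psum f k))^2)" .
  have "(\<Gamma> - \<epsilon>) * (\<Sum>j<e. (cmod (f j))^2) \<le> (\<Gamma> - \<epsilon>) * (1 + \<epsilon> / (2 * \<Gamma>))"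
    using f_norm norm0 \<epsilon> by (intro mult_left_mono) auto
  also have "\<dots> < \<Gamma> - \<epsilon> / 2"
    using \<epsilon> by (simp add: field_simps)
  finally have main: "(\<Gamma> - \<epsilon>) * (\<Sum>j<e. (cmod (f j))^2) < x"
    using x by simp
  have "0 < (\<Sum>j<e. (cmod (f j))^2)"
    using f_high energy x \<epsilon> by (intro sum_norm_sq_pos_if_energy_pos) auto
  then show ?thesis
    using \<open>s < e\<close> f_supp f_sum main energy by (intro exI[of _ f] exI[of _ e]) auto
qed

end

text \<open>Each block \<open>fb i\<close> lives on \<open>[st i, st (i + 1))\<close> and has total sum zero, so its partial sums
  live on the same interval: distinct blocks stay orthogonal after applying \<open>R\<^sub>\<alpha>\<close>.\<close>

locale zero_sum_blocks = bounded_Ralpha +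
  fixes \<epsilon> :: real and st :: "nat \<Rightarrow> nat" and fb :: "nat \<Rightarrow> nat \<Rightarrow> complex"
  assumes strict_mono_st: "strict_mono st"
    and block_supp: "\<And>i j. fb i j \<noteq> 0 \<Longrightarrow> st i \<le> j \<and> j < st (Suc i)"
    and block_sum: "\<And>i. (\<Sum>j<st (Suc i). fb i j) = 0"
    and block_norm_pos: "\<And>i. 0 < (\<Sum>j<st (Suc i). (cmod (fb i j))^2)"
    and block_energy: "\<And>i. (\<Gamma> - \<epsilon>) * (\<Sum>j<st (Suc i). (cmod (fb i j))^2)
      \<le> (\<Sum>k<st (Suc i). weight \<alpha> k * (cmod (psum (fb i) k))^2)"
begin

lemma st_mono: "i \<le> i' \<Longrightarrow> st i \<le> st i'"
  using strict_mono_st by (simp add: strict_mono_less_eq)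

lemma block_index_unique:
  assumes "st i \<le> k" "k < st (Suc i)" "st i' \<le> k" "k < st (Suc i')"
  shows "i = i'"
  using assms st_mono[of "Suc i" i'] st_mono[of "Suc i'" i] by (cases i i' rule: linorder_cases) auto

lemma block_vanishes_above: "st (Suc i) \<le> j \<Longrightarrow> fb i j = 0"
  using block_supp[of i j] by linarith

lemma psum_block_supp:
  assumes "psum (fb i) k \<noteq> 0"
  shows "st i \<le> k \<and> k < st (Suc i)"
proof -
  have "\<not> k < st i"
    using psum_eq_zero_below[of "fb i" "st i" k] block_supp assms by blast
  moreover have "\<not> st (Suc i) \<le> k"
    using psum_eq_zero_above[of "fb i" "st (Suc i)" k] block_supp block_sum assms by blast
  ultimately show ?thesis
    by simp
qed

lemma l2_block: "l2 (fb i)"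
  using l2_finite_support(1)[of "st (Suc i)" "fb i"] block_vanishes_above by blast

definition comb :: "(nat \<Rightarrow> complex) \<Rightarrow> nat \<Rightarrow> nat \<Rightarrow> complex" where
  "comb d N = (\<lambda>j. \<Sum>i\<le>N. d i * fb i j)"

lemma comb_vanishes_above: "st (Suc N) \<le> j \<Longrightarrow> comb d N j = 0"
  unfolding comb_def using st_mono[of "Suc _" "Suc N"] block_vanishes_above
  by (intro sum.neutral) (auto intro: order_trans)

lemma psum_comb: "psum (comb d N) k = (\<Sum>i\<le>N. d i * psum (fb i) k)"
  unfolding psum_def comb_def sum_distrib_left by (rule sum.swap)

lemma l2_comb: "l2 (comb d N)"
  using l2_finite_support(1)[of "st (Suc N)"] comb_vanishes_above by blast

lemma comb_scale: "comb (\<lambda>i. c * d i) N = (\<lambda>j. c * comb d N j)"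
  by (simp add: comb_def sum_distrib_left mult_ac fun_eq_iff)

lemma sum_up_to_block:
  assumes "i \<le> N" "\<And>k. st (Suc i) \<le> k \<Longrightarrow> g k = 0"
  shows "(\<Sum>k<st (Suc N). g k) = (\<Sum>k<st (Suc i). (g k :: real))"
  by (rule sum.mono_neutral_right) (use assms st_mono[of "Suc i" "Suc N"] in auto)

lemma sum_norm_comb_sq:
  "(\<Sum>j<st (Suc N). (cmod (comb d N j))^2)
     = (\<Sum>i\<le>N. (cmod (d i))^2 * (\<Sum>j<st (Suc i). (cmod (fb i j))^2))"
proof -
  have "(cmod (comb d N j))^2 = (\<Sum>i\<le>N. (cmod (d i * fb i j))^2)" for j
    unfolding comb_def
  proof (rule norm_sum_sq_single_nonzero)
    fix i i'
    assume "d i * fb i j \<noteq> 0" "d i' * fb i' j \<noteq> 0"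
    then show "i = i'"
      using block_supp[of i j] block_supp[of i' j] block_index_unique by auto
  qed simp
  then have "(cmod (comb d N j))^2 = (\<Sum>i\<le>N. (cmod (d i))^2 * (cmod (fb i j))^2)" for j
    by (simp add: norm_mult power_mult_distrib)
  then have "(\<Sum>j<st (Suc N). (cmod (comb d N j))^2)
      = (\<Sum>i\<le>N. (cmod (d i))^2 * (\<Sum>j<st (Suc N). (cmod (fb i j))^2))"
    by (simp add: sum_distrib_left sum.swap[of _ "{..<st (Suc N)}"])
  also have "\<dots> = (\<Sum>i\<le>N. (cmod (d i))^2 * (\<Sum>j<st (Suc i). (cmod (fb i j))^2))"
    by (intro sum.cong refl arg_cong2[where f = "(*)"] sum_up_to_block) (auto simp: block_vanishes_above)
  finally show ?thesis .
qed

lemma sum_energy_comb: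
  "(\<Sum>k<st (Suc N). weight \<alpha> k * (cmod (psum (comb d N) k))^2)
     = (\<Sum>i\<le>N. (cmod (d i))^2 * (\<Sum>k<st (Suc i). weight \<alpha> k * (cmod (psum (fb i) k))^2))"
proof -
  have "(cmod (psum (comb d N) k))^2 = (\<Sum>i\<le>N. (cmod (d i * psum (fb i) k))^2)" for k
    unfolding psum_comb
  proof (rule norm_sum_sq_single_nonzero)
    fix i i'
    assume "d i * psum (fb i) k \<noteq> 0" "d i' * psum (fb i') k \<noteq> 0"
    then show "i = i'"
      using psum_block_supp[of i k] psum_block_supp[of i' k] block_index_unique by auto
  qed simp
  then have "(cmod (psum (comb d N) k))^2 = (\<Sum>i\<le>N. (cmod (d i))^2 * (cmod (psum (fb i) k))^2)" for k
    by (simp add: norm_mult power_mult_distrib)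
  then have "(\<Sum>k<st (Suc N). weight \<alpha> k * (cmod (psum (comb d N) k))^2)
      = (\<Sum>i\<le>N. (cmod (d i))^2 * (\<Sum>k<st (Suc N). weight \<alpha> k * (cmod (psum (fb i) k))^2))"
    by (simp add: sum_distrib_left sum.swap[of _ "{..<st (Suc N)}"] mult_ac)
  also have "\<dots> = (\<Sum>i\<le>N. (cmod (d i))^2 * (\<Sum>k<st (Suc i). weight \<alpha> k * (cmod (psum (fb i) k))^2))"
    using psum_block_supp
    by (intro sum.cong refl arg_cong2[where f = "(*)"] sum_up_to_block) (auto, fastforce)
  finally show ?thesis .
qed

lemma l2norm_comb_sq: "(l2norm (comb d N))^2 = (\<Sum>j<st (Suc N). (cmod (comb d N j))^2)"
  using l2_finite_support(2)[of "st (Suc N)"] comb_vanishes_above by blast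

lemma l2norm_Ralpha_comb_sq:
  "(l2norm (Ralpha \<alpha> (comb d N)))^2 = (\<Sum>k<st (Suc N). weight \<alpha> k * (cmod (psum (comb d N) k))^2)"
proof -
  have "Ralpha \<alpha> (comb d N) k = 0" if "st (Suc N) \<le> k" for k
  proof -
    have "psum (comb d N) k = 0"
      unfolding psum_comb using that st_mono[of "Suc _" "Suc N"] psum_block_supp
      by (intro sum.neutral) (fastforce simp: not_less)
    then show ?thesis
      by (simp add: Ralpha_psum)
  qed
  then show ?thesis
    using l2_finite_support(2)[of "st (Suc N)" "Ralpha \<alpha> (comb d N)"] by (simp add: norm_Ralpha_sq)
qed

lemma l2norm_Ralpha_comb_ge: "(\<Gamma> - \<epsilon>) * (l2norm (comb d N))^2 \<le> (l2norm (Ralpha \<alpha> (comb d N)))^2"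
proof -
  have "(\<Gamma> - \<epsilon>) * (l2norm (comb d N))^2
      = (\<Sum>i\<le>N. (cmod (d i))^2 * ((\<Gamma> - \<epsilon>) * (\<Sum>j<st (Suc i). (cmod (fb i j))^2)))"
    unfolding l2norm_comb_sq sum_norm_comb_sq by (subst sum_distrib_left) (simp only: mult.left_commute)
  also have "\<dots> \<le> (l2norm (Ralpha \<alpha> (comb d N)))^2"
    unfolding l2norm_Ralpha_comb_sq sum_energy_comb by (intro sum_mono mult_left_mono block_energy) simp
  finally show ?thesis .
qed

lemma l2norm_comb_pos:
  assumes "i \<le> N" "d i \<noteq> 0"
  shows "0 < l2norm (comb d N)"
proof -
  have "0 < (cmod (d i))^2 * (\<Sum>j<st (Suc i). (cmod (fb i j))^2)"
    using assms block_norm_pos by simp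
  also have "\<dots> \<le> (l2norm (comb d N))^2"
    unfolding l2norm_comb_sq sum_norm_comb_sq using assms
    by (intro member_le_sum) (auto intro!: mult_nonneg_nonneg sum_nonneg)
  finally show ?thesis
    using l2norm_nonneg[OF l2_comb] by (simp add: zero_less_power2 less_le)
qed

lemma exists_unit_comb_in_kernel:
  assumes "finite_rank P"
  obtains d N where "l2norm (comb d N) = 1" "P (comb d N) = (\<lambda>k. 0)"
proof -
  have lin: "linear_op P"
    using assms by (simp add: finite_rank_def)
  obtain n :: nat and v :: "nat \<Rightarrow> nat \<Rightarrow> complex"
    where "\<forall>f. l2 f \<longrightarrow> (\<exists>c. P f = (\<lambda>k. \<Sum>l<n. c l * v l k))"
    using assms unfolding finite_rank_def by blast
  then have "\<forall>i. \<exists>c. P (fb i) = (\<lambda>k. \<Sum>l<n. c l * v l k)"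
    using l2_block by blast
  from choice[OF this] obtain c where c: "\<And>i. P (fb i) = (\<lambda>k. \<Sum>l<n. c i l * v l k)"
    by blast
  obtain d where d: "\<exists>i\<in>{..n}. d i \<noteq> 0" "\<forall>l<n. (\<Sum>i\<le>n. d i * c i l) = 0"
    using exists_nontrivial_vanishing_combination[of "{..n}" n c] by auto
  have P_comb: "P (comb (\<lambda>i. r * d i) n) = (\<lambda>k. 0)" for r
  proof -
    have "P (comb (\<lambda>i. r * d i) n) = (\<lambda>k. \<Sum>i\<le>n. r * d i * P (fb i) k)"
      unfolding comb_def by (rule linear_op_sum[OF lin]) (auto simp: l2_block)
    also have "\<dots> = (\<lambda>k. \<Sum>l<n. r * (\<Sum>i\<le>n. d i * c i l) * v l k)"
      by (simp add: c sum_distrib_left sum_distrib_right sum.swap[of _ "{..n}"] mult_ac)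
    finally show ?thesis
      using d(2) by simp
  qed
  define r where "r = 1 / l2norm (comb d n)"
  have "0 < l2norm (comb d n)"
    using d(1) l2norm_comb_pos by blast
  moreover have "(l2norm (comb (\<lambda>i. complex_of_real r * d i) n))^2 = r^2 * (l2norm (comb d n))^2"
    by (simp only: l2norm_comb_sq) (simp add: comb_scale norm_mult power_mult_distrib sum_distrib_left)
  ultimately have "(l2norm (comb (\<lambda>i. complex_of_real r * d i) n))^2 = 1"
    by (simp add: r_def power_divide)
  then have "l2norm (comb (\<lambda>i. complex_of_real r * d i) n) = 1"
    using l2norm_nonneg[OF l2_comb, of "\<lambda>i. complex_of_real r * d i" n] by (simp add: power2_eq_1_iff)
  then show ?thesis
    using that P_comb by blast
qed

lemma opnorm_Ralpha_minus_finite_rank_ge: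
  assumes "finite_rank P"
  shows "\<Gamma> - \<epsilon> \<le> (opnorm (\<lambda>f k. Ralpha \<alpha> f k - P f k))^2"
proof -
  obtain d N where unit: "l2norm (comb d N) = 1" and kernel: "P (comb d N) = (\<lambda>k. 0)"
    using exists_unit_comb_in_kernel[OF assms] by blast
  have "l2norm (\<lambda>k. Ralpha \<alpha> (comb d N) k - P (comb d N) k) \<le> opnorm (\<lambda>f k. Ralpha \<alpha> f k - P f k)"
    using assms unit bounded_op_Ralpha by (intro opnorm_upper bounded_op_diff l2_comb) (auto simp: finite_rank_def)
  then have "l2norm (Ralpha \<alpha> (comb d N)) \<le> opnorm (\<lambda>f k. Ralpha \<alpha> f k - P f k)"
    by (simp add: kernel)
  then have "(l2norm (Ralpha \<alpha> (comb d N)))^2 \<le> (opnorm (\<lambda>f k. Ralpha \<alpha> f k - P f k))^2"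
    by (simp add: l2_Ralpha l2_comb power_mono)
  then show ?thesis
    using l2norm_Ralpha_comb_ge[of d N] unit by simp
qed

definition unit_block :: "nat \<Rightarrow> nat \<Rightarrow> complex" where
  "unit_block i = (\<lambda>j. complex_of_real (1 / sqrt (\<Sum>j<st (Suc i). (cmod (fb i j))^2)) * fb i j)"

lemma l2_unit_block: "l2 (unit_block i)"
  unfolding unit_block_def by (rule l2_scale[OF l2_block])

lemma l2norm_unit_block: "l2norm (unit_block i) = 1"
proof -
  define n where "n = (\<Sum>j<st (Suc i). (cmod (fb i j))^2)"
  have "(l2norm (unit_block i))^2 = (\<Sum>j<st (Suc i). (cmod (unit_block i j))^2)"
    by (rule l2_finite_support(2)) (simp add: unit_block_def block_vanishes_above)
  also have "\<dots> = (\<Sum>j<st (Suc i). (cmod (fb i j))^2 / n)"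
    using block_norm_pos[of i] by (simp add: unit_block_def n_def norm_mult norm_divide power_divide)
  also have "\<dots> = 1"
    using block_norm_pos[of i] by (simp add: sum_divide_distrib[symmetric] n_def)
  finally show ?thesis
    using l2norm_nonneg[OF l2_unit_block, of i] by (simp add: power2_eq_1_iff)
qed

lemma Ralpha_unit_block_mass:
  "\<Gamma> - \<epsilon> \<le> (\<Sum>k\<in>{st i..<st (Suc i)}. (cmod (Ralpha \<alpha> (unit_block i) k))^2)"
proof -
  define n where "n = (\<Sum>j<st (Suc i). (cmod (fb i j))^2)"
  have "(\<Sum>k\<in>{st i..<st (Suc i)}. weight \<alpha> k * (cmod (psum (fb i) k))^2)
      = (\<Sum>k<st (Suc i). weight \<alpha> k * (cmod (psum (fb i) k))^2)"
  proof (rule sum.mono_neutral_left)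
    show "\<forall>k\<in>{..<st (Suc i)} - {st i..<st (Suc i)}. weight \<alpha> k * (cmod (psum (fb i) k))^2 = 0"
      using psum_block_supp[of i] by force
  qed auto
  moreover have "(cmod (Ralpha \<alpha> (unit_block i) k))^2 = weight \<alpha> k * (cmod (psum (fb i) k))^2 / n" for k
    unfolding unit_block_def Ralpha_scale using block_norm_pos[of i]
    by (simp add: n_def norm_Ralpha_sq norm_divide power_divide)
  ultimately have "(\<Sum>k\<in>{st i..<st (Suc i)}. (cmod (Ralpha \<alpha> (unit_block i) k))^2)
      = (\<Sum>k<st (Suc i). weight \<alpha> k * (cmod (psum (fb i) k))^2) / n"
    by (simp add: sum_divide_distrib[symmetric])
  then show ?thesis
    using block_energy[of i] block_norm_pos[of i] by (simp add: n_def pos_le_divide_eq)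
qed

lemma not_compact_Ralpha:
  assumes "\<epsilon> < \<Gamma>"
  shows "\<not> compact_op (Ralpha \<alpha>)"
proof
  assume "compact_op (Ralpha \<alpha>)"
  moreover have "\<forall>i. l2 (unit_block i) \<and> l2norm (unit_block i) \<le> 1"
    using l2_unit_block l2norm_unit_block by simp
  ultimately obtain g r where "l2 g" "strict_mono r"
    "(\<lambda>m. l2norm (\<lambda>k. Ralpha \<alpha> (unit_block (r m)) k - g k)) \<longlonglongrightarrow> 0"
    unfolding compact_op_def by blast
  then show False
    using no_l2_limit_of_escaping_mass[OF l2_Ralpha[OF l2_unit_block] strict_mono_st _ Ralpha_unit_block_mass]
      assms by simp
qed

end

context bounded_Ralpha
begin

lemma exists_zero_sum_blocks:
  assumes "0 < \<epsilon>" "\<epsilon> < \<Gamma>"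
  obtains st fb where "zero_sum_blocks \<alpha> C \<epsilon> st fb"
proof -
  let ?Q = "\<lambda>s f e. s < e \<and> (\<forall>j. f j \<noteq> 0 \<longrightarrow> s \<le> j \<and> j < e) \<and> (\<Sum>j<e. f j) = 0 \<and>
     0 < (\<Sum>j<e. (cmod (f j))^2) \<and>
     (\<Gamma> - \<epsilon>) * (\<Sum>j<e. (cmod (f j))^2) \<le> (\<Sum>k<e. weight \<alpha> k * (cmod (psum f k))^2)"
  have "\<forall>s. \<exists>p. ?Q s (fst p) (snd p)"
  proof
    fix s
    obtain f e where "?Q s f e"
      using exists_block[OF assms, of s] by blast
    then show "\<exists>p. ?Q s (fst p) (snd p)"
      by (intro exI[of _ "(f, e)"]) simp
  qed
  from choice[OF this] obtain next_block where next_block: "\<forall>s. ?Q s (fst (next_block s)) (snd (next_block s))"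
    by blast
  define st where "st i = ((snd \<circ> next_block) ^^ i) 0" for i
  define fb where "fb i = fst (next_block (st i))" for i
  have Q: "?Q (st i) (fb i) (st (Suc i))" for i
    using next_block by (simp add: st_def fb_def)
  then have "strict_mono st"
    by (simp add: strict_mono_Suc_iff)
  with Q have "zero_sum_blocks \<alpha> C \<epsilon> st fb"
    by unfold_locales blast+
  then show ?thesis
    by (rule that)
qed

lemma \<Gamma>_le_opnorm_Ralpha_minus_finite_rank:
  assumes P: "finite_rank P"
  shows "\<Gamma> \<le> (opnorm (\<lambda>f k. Ralpha \<alpha> f k - P f k))^2"
proof (rule field_le_epsilon)
  fix \<epsilon> :: real
  assume \<epsilon>: "0 < \<epsilon>"
  show "\<Gamma> \<le> (opnorm (\<lambda>f k. Ralpha \<alpha> f k - P f k))^2 + \<epsilon>"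
  proof (cases "\<epsilon> < \<Gamma>")
    case True
    obtain st fb where "zero_sum_blocks \<alpha> C \<epsilon> st fb"
      using exists_zero_sum_blocks[OF \<epsilon> True] by blast
    then show ?thesis
      using zero_sum_blocks.opnorm_Ralpha_minus_finite_rank_ge[OF _ P] by fastforce
  qed (use zero_le_power2[of "opnorm (\<lambda>f k. Ralpha \<alpha> f k - P f k)"] in linarith)
qed

lemma ess_norm_Ralpha: "ess_norm (Ralpha \<alpha>) = sqrt \<Gamma>"
proof -
  define E where "E = {opnorm (\<lambda>f k. Ralpha \<alpha> f k - P f k) | P. finite_rank P}"
  have E_nonneg: "0 \<le> x" if "x \<in> E" for x
    using that bounded_op_Ralpha
    by (auto simp: E_def finite_rank_def intro!: opnorm_nonneg bounded_op_diff)
  have trunc_in_E: "opnorm (\<lambda>f k. Ralpha \<alpha> f k - Ralpha \<alpha> (trunc N f) k) \<in> E" for N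
    unfolding E_def using finite_rank_Ralpha_trunc[of N]
    by (intro CollectI exI[of _ "\<lambda>f. Ralpha \<alpha> (trunc N f)"]) simp
  have "sqrt \<Gamma> \<le> Inf E"
  proof (rule cInf_greatest)
    show "E \<noteq> {}"
      using trunc_in_E by blast
    fix x
    assume x: "x \<in> E"
    then obtain P where "finite_rank P" "x = opnorm (\<lambda>f k. Ralpha \<alpha> f k - P f k)"
      unfolding E_def by blast
    then have "\<Gamma> \<le> x^2"
      using \<Gamma>_le_opnorm_Ralpha_minus_finite_rank by blast
    then show "sqrt \<Gamma> \<le> x"
      using E_nonneg[OF x] by (rule real_le_lsqrt[rotated])
  qed
  moreover have "Inf E \<le> sqrt \<Gamma>"
  proof (rule LIMSEQ_le_const)
    show "(\<lambda>N. sqrt (tail_norm2 N)) \<longlonglongrightarrow> sqrt \<Gamma>"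
      using tail_norm2_tendsto by (rule tendsto_real_sqrt)
    have "bdd_below E"
      using E_nonneg by (rule bdd_belowI)
    then have "Inf E \<le> sqrt (tail_norm2 N)" for N
      using cInf_lower[OF trunc_in_E[of N]] opnorm_Ralpha_minus_trunc_le[of N] by simp
    then show "\<exists>N. \<forall>n\<ge>N. Inf E \<le> sqrt (tail_norm2 n)"
      by blast
  qed
  ultimately show ?thesis
    by (simp add: ess_norm_def E_def)
qed

lemma compact_imp_\<Gamma>_eq_0:
  assumes "compact_op (Ralpha \<alpha>)"
  shows "\<Gamma> = 0"
proof (rule ccontr)
  assume "\<Gamma> \<noteq> 0"
  then have "0 < \<Gamma> / 2" "\<Gamma> / 2 < \<Gamma>"
    using \<Gamma>_nonneg by auto
  then obtain st fb where "zero_sum_blocks \<alpha> C (\<Gamma> / 2) st fb"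
    using exists_zero_sum_blocks by blast
  then show False
    using zero_sum_blocks.not_compact_Ralpha assms \<open>\<Gamma> / 2 < \<Gamma>\<close> by blast
qed

end

theorem theorem4p5:
  fixes \<alpha> :: "nat \<Rightarrow> complex"
  assumes "l2 \<alpha>"
    and "bounded_op (Ralpha \<alpha>)"
  shows "\<exists>\<L>. (\<lambda>n. Ltail \<alpha> n) \<longlonglongrightarrow> \<L> \<and>
           ess_norm (Ralpha \<alpha>) = \<L> / sqrt 2 \<and>
           (compact_op (Ralpha \<alpha>) \<longleftrightarrow> \<L> = 0)"
proof -
  obtain C where "0 \<le> C" "\<And>f. l2 f \<Longrightarrow> l2norm (Ralpha \<alpha> f) \<le> C * l2norm f"
    using bounded_op_nonneg_bound[OF assms(2)] by blast
  with assms interpret bounded_Ralpha \<alpha> C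
    by unfold_locales (auto simp: bounded_op_def)
  have "ess_norm (Ralpha \<alpha>) = sqrt (2 * \<Gamma>) / sqrt 2"
    by (simp add: ess_norm_Ralpha real_sqrt_mult)
  moreover have "compact_op (Ralpha \<alpha>) \<longleftrightarrow> sqrt (2 * \<Gamma>) = 0"
    using compact_imp_\<Gamma>_eq_0 \<Gamma>_eq_0_imp_compact by auto
  ultimately show ?thesis
    using Ltail_tendsto by blast
qed

end
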